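(* Let $j$ be a fixed positive integer and let $g:[0,\infty)^j\to[0,\infty)$ be a nonnegative function that is Riemann integrable on every bounded box. Suppose there are constants $C,d\ge 0$ such that $g(x_1,\dots,x_j)\le C(x_1+\cdots+x_j)^d$ for all $x_1,\dots,x_j\ge 0$. Then \[ \mathbf E\left[g\left(\frac{X_1}{\mu},\dots,\frac{X_j}{\mu}\right)\right]=\int_0^\infty\!\!\cdots\int_0^\infty g(x_1,\dots,x_j)e^{-x_1-\cdots-x_j}\,dx_1\cdots dx_j+o(1). \] Moreover, the same holds with $(X_1,\dots,X_j)$ replaced by $(X_{\sigma(1)},\dots,X_{\sigma(j)})$ for any distinct indices $\sigma(1),\dots,\sigma(j)\in\{1,\dots,m\}$, with the $o(1)$ term independent of $\sigma$.
   Context: Let $N$ be a positive integer and $\omega=\omega(N)$ a function with $\omega(N)\to\infty$. For integers $m$ with $\omega<m<N/\omega$, let $\Omega$ be the set of all sequences $(X_1,\dots,X_m)$ of positive integers with $X_1+\cdots+X_m=N$, equipped with the uniform distribution, and write $\mu=N/m$. All asymptotic notation ($o(1)$, $O(\cdot)$, a.a.s.) refers to $N\to\infty$, uniformly over all $m$ with $\omega<m<N/\omega$. *)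

theory Defs
  imports "HOL-Analysis.Analysis"
begin

text \<open>Riemann integrability on a compact box: the classical Riemann integral, i.e. the
  gauge integral restricted to constant gauges (tagged divisions of mesh < delta).\<close>
definition riemann_integrable_on :: "('a::euclidean_space \<Rightarrow> real) \<Rightarrow> 'a set \<Rightarrow> bool" where
  "riemann_integrable_on f S \<longleftrightarrow>
     (\<exists>I. \<forall>e>0. \<exists>\<delta>>0. \<forall>D. D tagged_division_of S \<and> (\<lambda>x. ball x \<delta>) fine D \<longrightarrow>
        \<bar>(\<Sum>(x,K)\<in>D. measure lborel K * f x) - I\<bar> < e)"

definition orthant :: "(real^'j) set" where
  "orthant = {x. \<forall>i. 0 \<le> x $ i}"

definition compositions :: "nat \<Rightarrow> nat \<Rightarrow> (nat \<Rightarrow> nat) set" where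
  "compositions N m = {X. (\<forall>i\<in>{1..m}. 0 < X i) \<and> (\<forall>i. i \<notin> {1..m} \<longrightarrow> X i = 0)
                          \<and> (\<Sum>i=1..m. X i) = N}"

definition comp_expect :: "nat \<Rightarrow> nat \<Rightarrow> ((nat \<Rightarrow> nat) \<Rightarrow> real) \<Rightarrow> real" where
  "comp_expect N m F = (\<Sum>X\<in>compositions N m. F X) / real (card (compositions N m))"

text \<open>Power with the convention s^0 = 1 (also for s = 0).\<close>
definition pow0 :: "real \<Rightarrow> real \<Rightarrow> real" where
  "pow0 s d = (if d = 0 then 1 else s powr d)"

end

theory Submission
  imports Defs
begin

text \<open>
  The vector (X_sigma(i))_i equals a given positive
  a with probability marg_prob k N m |a| = (N-|a|-1 choose m-k-1) / (N-1 choose m-1), so the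
  expectation of g(X_sigma/mu) is an explicit lattice sum (Section 1).  Elementary binomial
  estimates show mu^k e^{|a|/mu} marg_prob k N m |a| -> 1 uniformly for |a| = O(mu) (the
  local limit theorem), together with a bound of order mu^{-k} e^{-|a|/(2mu)} everywhere
  (Section 2).  Lattice Riemann sums of mesh 1/mu of g(x)e^{-|x|} converge to the integral on
  bounded boxes (Section 3), and the growth hypothesis g \<le> C|x|^d \<le> G e^{|x|/8} makes the
  weighted integral over the orthant finite (Section 4).  The theorem follows by cutting the
  lattice sum at the cube of side K mu: inside, the local limit theorem and the Riemann sums
  apply; outside, the tail bound makes the contribution O(e^{-K/8}) (Section 5).
\<close>

section \<open>Counting compositions\<close>

definition comp_on :: "'a set \<Rightarrow> nat \<Rightarrow> ('a \<Rightarrow> nat) set" where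
  "comp_on S n = {X. (\<forall>i\<in>S. 0 < X i) \<and> (\<forall>i. i \<notin> S \<longrightarrow> X i = 0) \<and> sum X S = n}"

lemma compositions_eq_comp_on: "compositions N m = comp_on {1..m} N"
  by (simp add: compositions_def comp_on_def)

text \<open>Compositions over a finite index set form a finite set, as every part is at most n.\<close>
lemma finite_comp_on:
  assumes "finite S" shows "finite (comp_on S n)"
proof -
  have "X i \<le> n" if "X \<in> comp_on S n" "i \<in> S" for X i
    using that assms member_le_sum[of i S X] by (auto simp: comp_on_def)
  hence "(\<lambda>X. restrict X S) ` comp_on S n \<subseteq> PiE S (\<lambda>_. {..n})" by auto
  hence "finite ((\<lambda>X. restrict X S) ` comp_on S n)"
    using assms by (meson finite_PiE finite_atMost finite_subset)
  moreover have "inj_on (\<lambda>X. restrict X S) (comp_on S n)"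
    unfolding inj_on_def comp_on_def restrict_def fun_eq_iff by (metis (mono_tags, lifting) mem_Collect_eq)
  ultimately show ?thesis using finite_imageD by blast
qed

text \<open>A shifted hockey-stick identity, the recursion step for counting compositions.\<close>
lemma sum_choose_shift: "(\<Sum>t\<in>{1..<n}. (n - t - 1) choose q) = (n - 1) choose Suc q"
proof (cases n)
  case (Suc n')
  have "(\<Sum>t\<in>{1..<n}. (n - t - 1) choose q) = (\<Sum>t\<in>{0..<n'}. (n' - t - 1) choose q)"
    unfolding Suc by (rule sum.reindex_bij_witness[where i="\<lambda>t. t+1" and j="\<lambda>t. t - 1"]) auto
  also have "\<dots> = (\<Sum>t\<in>{0..<n'}. t choose q)"
    by (subst sum.atLeastLessThan_rev) (auto intro!: sum.cong)
  also have "\<dots> = n' choose Suc q"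
    by (cases n') (simp_all add: atLeast0LessThan lessThan_Suc_atMost sum_choose_upper)
  finally show ?thesis using Suc by simp
qed simp

text \<open>Stars and bars: a set of size c has (n-1 choose c-1) compositions of n > 0.
  Induction on S, splitting off the value t of the new coordinate.\<close>
lemma card_comp_on:
  assumes "finite S" "S \<noteq> {}" "0 < n"
  shows "card (comp_on S n) = (n - 1) choose (card S - 1)"
  using assms
proof (induction S arbitrary: n rule: finite_ne_induct)
  case (singleton x)
  have "comp_on {x} n = {(\<lambda>i. if i = x then n else 0)}"
    using singleton by (auto simp: comp_on_def fun_eq_iff)
  thus ?case by simp
next
  case (insert x F)
  let ?ext = "\<lambda>t Y. Y(x := t)"
  have split: "comp_on (insert x F) n = (\<Union>t\<in>{1..<n}. ?ext t ` comp_on F (n - t))"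
  proof (rule set_eqI, rule iffI)
    fix X assume X: "X \<in> comp_on (insert x F) n"
    have pos: "0 < sum X F" using X insert by (intro sum_pos) (auto simp: comp_on_def)
    have tot: "X x + sum X F = n" using X insert by (auto simp: comp_on_def)
    have "sum (X(x:=0)) F = sum X F" using insert by (intro sum.cong) auto
    hence "X(x := 0) \<in> comp_on F (n - X x)" using X insert tot by (auto simp: comp_on_def)
    moreover have "X = ?ext (X x) (X(x:=0))" by simp
    moreover have "X x \<in> {1..<n}" using X pos tot by (auto simp: comp_on_def)
    ultimately show "X \<in> (\<Union>t\<in>{1..<n}. ?ext t ` comp_on F (n - t))" by blast
  next
    fix X assume "X \<in> (\<Union>t\<in>{1..<n}. ?ext t ` comp_on F (n - t))"
    then obtain t Y where t: "t \<in> {1..<n}" and Y: "Y \<in> comp_on F (n - t)" and XY: "X = Y(x:=t)"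
      by blast
    have "sum X F = sum Y F" unfolding XY using insert by (intro sum.cong) auto
    thus "X \<in> comp_on (insert x F) n" using t Y XY insert by (auto simp: comp_on_def)
  qed
  have inj: "inj_on (?ext t) (comp_on F (n - t))" for t
    using insert by (auto simp: inj_on_def comp_on_def fun_eq_iff) metis
  have "card (comp_on (insert x F) n) = (\<Sum>t\<in>{1..<n}. card (?ext t ` comp_on F (n - t)))"
    unfolding split using finite_comp_on[OF insert.hyps(1)]
    by (intro card_UN_disjoint) (auto dest: fun_cong[where x=x])
  also have "\<dots> = (\<Sum>t\<in>{1..<n}. (n - t - 1) choose (card F - 1))"
    using insert by (intro sum.cong refl) (simp add: card_image[OF inj] insert.IH)
  also have "\<dots> = (n - 1) choose Suc (card F - 1)" by (rule sum_choose_shift)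
  finally show ?case using insert by (simp add: Suc_diff_1 card_gt_0_iff)
qed

lemma card_compositions:
  "0 < N \<Longrightarrow> 0 < m \<Longrightarrow> card (compositions N m) = (N - 1) choose (m - 1)"
  unfolding compositions_eq_comp_on by (subst card_comp_on) auto

lemma card_comp_on_prescribed:
  assumes S: "finite S" and RS: "R \<subseteq> S" and bpos: "\<forall>i\<in>R. 0 < b i" and bn: "sum b R \<le> n"
  shows "card {X \<in> comp_on S n. \<forall>i\<in>R. X i = b i} = card (comp_on (S - R) (n - sum b R))"
proof -
  have R: "finite R" using S RS finite_subset by blast
  have split: "sum X S = sum X R + sum X (S - R)" for X :: "'a \<Rightarrow> nat"
    using S RS by (metis add.commute sum.subset_diff)
  let ?merge = "\<lambda>Y i. if i \<in> R then b i else Y i"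
  let ?forget = "\<lambda>X i. if i \<in> R then 0 else X i"
  have "bij_betw ?merge (comp_on (S - R) (n - sum b R)) {X \<in> comp_on S n. \<forall>i\<in>R. X i = b i}"
  proof (rule bij_betw_byWitness[where f'="?forget"])
    show "\<forall>Y\<in>comp_on (S - R) (n - sum b R). ?forget (?merge Y) = Y"
      by (auto simp: comp_on_def fun_eq_iff)
    show "\<forall>X\<in>{X \<in> comp_on S n. \<forall>i\<in>R. X i = b i}. ?merge (?forget X) = X"
      by (auto simp: fun_eq_iff)
    show "?merge ` comp_on (S - R) (n - sum b R) \<subseteq> {X \<in> comp_on S n. \<forall>i\<in>R. X i = b i}"
    proof (rule image_subsetI)
      fix Y assume Y: "Y \<in> comp_on (S - R) (n - sum b R)"
      have "sum (?merge Y) R = sum b R" "sum (?merge Y) (S - R) = sum Y (S - R)" by (auto intro: sum.cong)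
      thus "?merge Y \<in> {X \<in> comp_on S n. \<forall>i\<in>R. X i = b i}"
        using Y bpos bn RS split[of "?merge Y"] by (auto simp: comp_on_def)
    qed
    show "?forget ` {X \<in> comp_on S n. \<forall>i\<in>R. X i = b i} \<subseteq> comp_on (S - R) (n - sum b R)"
    proof (rule image_subsetI, clarify)
      fix X assume X: "X \<in> comp_on S n" "\<forall>i\<in>R. X i = b i"
      have "sum X R = sum b R" "sum (?forget X) (S - R) = sum X (S - R)" using X(2) by (auto intro: sum.cong)
      thus "?forget X \<in> comp_on (S - R) (n - sum b R)" using X split[of X] by (auto simp: comp_on_def)
    qed
  qed
  thus ?thesis by (rule bij_betw_same_card[symmetric])
qed

abbreviation lattice_cube :: "nat \<Rightarrow> ('j \<Rightarrow> nat) set" where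
  "lattice_cube L \<equiv> PiE UNIV (\<lambda>_. {1..L})"

text \<open>The probability that k prescribed coordinates of a uniform composition of N into m
  parts take given positive values with sum s.\<close>
definition marg_prob :: "nat \<Rightarrow> nat \<Rightarrow> nat \<Rightarrow> nat \<Rightarrow> real" where
  "marg_prob k N m s = real ((N - s - 1) choose (m - k - 1)) / real ((N - 1) choose (m - 1))"

lemma marg_prob_nonneg: "0 \<le> marg_prob k N m s"
  by (simp add: marg_prob_def)

lemma card_compositions_marginal:
  fixes \<sigma> :: "'j::finite \<Rightarrow> nat" and a :: "'j \<Rightarrow> nat"
  assumes inj: "inj \<sigma>" and rng: "range \<sigma> \<subseteq> {1..m}" and apos: "\<forall>i. 0 < a i"
    and mk: "CARD('j) + 2 \<le> m"
  shows "card {X \<in> compositions N m. (\<lambda>i. X (\<sigma> i)) = a}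
           = (N - sum a UNIV - 1) choose (m - CARD('j) - 1)"
proof -
  define b where "b i = a (inv \<sigma> i)" for i
  let ?R = "range \<sigma>" and ?s = "sum a UNIV"
  have fiber: "{X \<in> compositions N m. (\<lambda>i. X (\<sigma> i)) = a} = {X \<in> comp_on {1..m} N. \<forall>i\<in>?R. X i = b i}"
    using inj by (auto simp: compositions_eq_comp_on b_def fun_eq_iff)
  have sum_b: "sum b ?R = ?s" using inj by (simp add: sum.reindex b_def)
  have card_rest: "card ({1..m} - ?R) = m - CARD('j)"
    using inj rng by (simp add: card_Diff_subset card_image)
  have "0 < card ({1..m} - ?R)" using card_rest mk by simp
  hence rest_ne: "{1..m} - ?R \<noteq> {}" by (metis card.empty less_irrefl)
  show ?thesis
  proof (cases "?s < N")
    case True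
    have "card {X \<in> comp_on {1..m} N. \<forall>i\<in>?R. X i = b i} = card (comp_on ({1..m} - ?R) (N - ?s))"
      using rng apos True sum_b by (subst card_comp_on_prescribed) (auto simp: b_def)
    also have "\<dots> = (N - ?s - 1) choose (m - CARD('j) - 1)"
      using True card_rest rest_ne by (subst card_comp_on) auto
    finally show ?thesis unfolding fiber .
  next
    case False
    have "{X \<in> comp_on {1..m} N. \<forall>i\<in>?R. X i = b i} = {}"
    proof (rule ccontr)
      assume "\<not> ?thesis"
      then obtain X where X: "X \<in> comp_on {1..m} N" "\<forall>i\<in>?R. X i = b i" by blast
      have "0 < sum X ({1..m} - ?R)" using X(1) rest_ne by (intro sum_pos) (auto simp: comp_on_def)
      moreover have "sum X ?R = ?s" using X(2) sum_b by (metis sum.cong)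
      moreover have "sum X {1..m} = sum X ?R + sum X ({1..m} - ?R)"
        using rng by (metis add.commute finite_atLeastAtMost sum.subset_diff)
      ultimately show False using X(1) False by (simp add: comp_on_def)
    qed
    hence "card {X \<in> comp_on {1..m} N. \<forall>i\<in>?R. X i = b i} = 0" by (simp only: card.empty)
    thus ?thesis using False mk unfolding fiber by simp
  qed
qed

lemma comp_expect_marginal:
  fixes \<sigma> :: "'j::finite \<Rightarrow> nat" and F :: "('j \<Rightarrow> nat) \<Rightarrow> real"
  assumes inj: "inj \<sigma>" and rng: "range \<sigma> \<subseteq> {1..m}" and mk: "CARD('j) + 2 \<le> m" and N: "0 < N"
  shows "comp_expect N m (\<lambda>X. F (\<lambda>i. X (\<sigma> i)))
           = (\<Sum>a\<in>lattice_cube N. F a * marg_prob CARD('j) N m (sum a UNIV))"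
proof -
  let ?fiber = "\<lambda>a. {X \<in> compositions N m. (\<lambda>i. X (\<sigma> i)) = a}"
  have fin: "finite (compositions N m)" by (simp add: compositions_eq_comp_on finite_comp_on)
  have maps: "(\<lambda>X i. X (\<sigma> i)) ` compositions N m \<subseteq> lattice_cube N"
  proof (rule image_subsetI)
    fix X assume X: "X \<in> compositions N m"
    have "X (\<sigma> i) \<in> {1..N}" for i
    proof -
      have si: "\<sigma> i \<in> {1..m}" using rng by blast
      have "X (\<sigma> i) \<le> sum X {1..m}" using si by (intro member_le_sum) auto
      thus ?thesis using X si by (auto simp: compositions_def Suc_le_eq)
    qed
    thus "(\<lambda>i. X (\<sigma> i)) \<in> lattice_cube N" by auto
  qed
  have "(\<Sum>X\<in>compositions N m. F (\<lambda>i. X (\<sigma> i))) = (\<Sum>a\<in>lattice_cube N. \<Sum>X\<in>?fiber a. F (\<lambda>i. X (\<sigma> i)))"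
    by (rule sum.group[symmetric, OF fin _ maps]) (simp add: finite_PiE)
  also have "\<dots> = (\<Sum>a\<in>lattice_cube N. F a * real (card (?fiber a)))"
    by (intro sum.cong refl) simp
  also have "\<dots> = (\<Sum>a\<in>lattice_cube N. F a * real ((N - sum a UNIV - 1) choose (m - CARD('j) - 1)))"
  proof (intro sum.cong refl)
    fix a :: "'j \<Rightarrow> nat" assume "a \<in> lattice_cube N"
    hence "\<forall>i. 0 < a i" by (auto simp: PiE_iff Suc_le_eq)
    thus "F a * real (card (?fiber a)) = F a * real ((N - sum a UNIV - 1) choose (m - CARD('j) - 1))"
      by (simp add: card_compositions_marginal[OF inj rng _ mk])
  qed
  finally show ?thesis
    using card_compositions[OF N] mk
    by (simp add: comp_expect_def marg_prob_def sum_divide_distrib)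
qed

section \<open>Binomial estimates for the marginal probabilities\<close>

lemma choose_pred_pred:
  assumes "0 < n" "0 < k"
  shows "real ((n - 1) choose (k - 1)) * real n = real (n choose k) * real k"
proof -
  obtain n' k' where nk: "n = Suc n'" "k = Suc k'" using assms by (metis gr0_implies_Suc)
  have "(n' choose k') * Suc n' = (Suc n' choose Suc k') * Suc k'"
    using Suc_times_binomial[of k' n'] by (simp only: mult.commute)
  hence "real ((n' choose k') * Suc n') = real ((Suc n' choose Suc k') * Suc k')" by (simp only:)
  thus ?thesis unfolding nk by (simp only: of_nat_mult diff_Suc_1)
qed

lemma choose_ratio_bounds:
  assumes "m \<le> N" "j < m"
  shows "((real m - j) / N) ^ j * real ((N-1) choose (m-1)) \<le> real ((N-1-j) choose (m-1-j))
       \<and> real ((N-1-j) choose (m-1-j)) \<le> (real m / N) ^ j * real ((N-1) choose (m-1))"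
  using assms(2)
proof (induction j)
  case (Suc j)
  have IH: "((real m - j) / N) ^ j * real ((N-1) choose (m-1)) \<le> real ((N-1-j) choose (m-1-j))"
       "real ((N-1-j) choose (m-1-j)) \<le> (real m / N) ^ j * real ((N-1) choose (m-1))"
    using Suc by auto
  have Npos: "real (N - 1 - j) > 0" using Suc.prems assms by simp
  have "real ((N - 1 - Suc j) choose (m - 1 - Suc j)) * real (N - 1 - j) =
         real ((N - 1 - j) choose (m - 1 - j)) * real (m - 1 - j)"
  proof -
    have e: "N - 1 - Suc j = N - 1 - j - 1" "m - 1 - Suc j = m - 1 - j - 1" by simp_all
    show ?thesis unfolding e by (rule choose_pred_pred) (use Suc.prems assms in auto)
  qed
  hence step: "real ((N - 1 - Suc j) choose (m - 1 - Suc j)) =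
         real ((N - 1 - j) choose (m - 1 - j)) * (real (m - 1 - j) / real (N - 1 - j))"
    using Npos by (simp add: eq_divide_eq)
  have ratio_up: "real (m - 1 - j) / real (N - 1 - j) \<le> real m / N"
  proof -
    have "real m * (1 + real j) \<le> real N * (1 + real j)" by (intro mult_right_mono) (use assms in auto)
    hence "real (m - 1 - j) * N \<le> real m * real (N - 1 - j)"
      using Suc.prems assms by (simp add: of_nat_diff algebra_simps)
    thus ?thesis using Npos assms Suc.prems by (simp add: divide_simps)
  qed
  have ratio_lo: "(real m - Suc j) / N \<le> real (m - 1 - j) / real (N - 1 - j)"
  proof -
    have "(real m - Suc j) = real (m - 1 - j)" using Suc.prems by (simp add: of_nat_diff)
    moreover have "real (m - 1 - j) / N \<le> real (m - 1 - j) / real (N - 1 - j)"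
      using Npos by (intro frac_le) auto
    ultimately show ?thesis by (simp only:)
  qed
  have r_nn: "0 \<le> (real m - Suc j) / N" using Suc.prems by simp
  show ?case
  proof
    have "((real m - Suc j) / N) ^ Suc j * real ((N-1) choose (m-1))
        = ((real m - Suc j) / N) * (((real m - Suc j) / N) ^ j * real ((N-1) choose (m-1)))" by simp
    also have "\<dots> \<le> ((real m - Suc j) / N) * (((real m - j) / N) ^ j * real ((N-1) choose (m-1)))"
      using r_nn by (intro mult_left_mono mult_right_mono power_mono) (auto simp: divide_right_mono)
    also have "\<dots> \<le> ((real m - Suc j) / N) * real ((N-1-j) choose (m-1-j))"
      using r_nn IH(1) by (intro mult_left_mono) auto
    also have "\<dots> \<le> (real (m - 1 - j) / real (N - 1 - j)) * real ((N-1-j) choose (m-1-j))"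
      using ratio_lo by (intro mult_right_mono) auto
    finally show "((real m - Suc j) / N) ^ Suc j * real ((N-1) choose (m-1))
                    \<le> real ((N-1-Suc j) choose (m-1-Suc j))"
      using step by (simp add: mult.commute)
  next
    have "real ((N-1-Suc j) choose (m-1-Suc j)) = (real (m - 1 - j) / real (N - 1 - j)) * real ((N-1-j) choose (m-1-j))"
      using step by simp
    also have "\<dots> \<le> (real m / N) * real ((N-1-j) choose (m-1-j))"
      using ratio_up by (intro mult_right_mono) auto
    also have "\<dots> \<le> (real m / N) * ((real m / N) ^ j * real ((N-1) choose (m-1)))"
      using IH(2) by (intro mult_left_mono) auto
    finally show "real ((N-1-Suc j) choose (m-1-Suc j)) \<le> (real m / N) ^ Suc j * real ((N-1) choose (m-1))"
      by simp
  qed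
qed simp

lemma choose_shift_bounds:
  assumes "t + r \<le> n" "1 \<le> r"
  shows "(1 - real r / (n - t)) ^ t * real (n choose r) \<le> real ((n - t) choose r)
       \<and> real ((n - t) choose r) \<le> (1 - real r / n) ^ t * real (n choose r)"
  using assms(1)
proof (induction t)
  case (Suc t)
  have IH: "(1 - real r / (n - t)) ^ t * real (n choose r) \<le> real ((n - t) choose r)"
           "real ((n - t) choose r) \<le> (1 - real r / n) ^ t * real (n choose r)"
    using Suc by auto
  have pos: "real (n - t) > 0" "real (n - Suc t) > 0" using Suc.prems assms by auto
  have "(n - t - r) * ((n - t) choose r) = (n - t) * ((n - t - 1) choose r)"
    by (rule binomial_absorb_comp)
  hence "real (n - t - r) * real ((n - t) choose r) = real (n - t) * real ((n - Suc t) choose r)"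
    by (metis diff_Suc_eq_diff_pred diff_commute of_nat_mult)
  hence step: "real ((n - Suc t) choose r) = (1 - real r / real (n - t)) * real ((n - t) choose r)"
    using pos Suc.prems by (simp add: of_nat_diff field_simps)
  have f_nn: "0 \<le> 1 - real r / real (n - t)" using pos Suc.prems by (simp add: of_nat_diff field_simps)
  have f_up: "1 - real r / real (n - t) \<le> 1 - real r / n" using pos by (simp add: frac_le)
  have g_nn: "0 \<le> 1 - real r / real (n - Suc t)" using pos Suc.prems by (simp add: of_nat_diff field_simps)
  have g_up: "1 - real r / real (n - Suc t) \<le> 1 - real r / real (n - t)" using pos by (simp add: frac_le)
  have h_nn: "0 \<le> 1 - real r / n" using Suc.prems by (simp add: field_simps)
  show ?case
  proof
    have "(1 - real r / real (n - Suc t)) ^ Suc t * real (n choose r)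
       = (1 - real r / real (n - Suc t)) * ((1 - real r / real (n - Suc t)) ^ t * real (n choose r))"
      by simp
    also have "\<dots> \<le> (1 - real r / real (n - t)) * ((1 - real r / real (n - t)) ^ t * real (n choose r))"
      using g_nn g_up f_nn by (intro mult_mono mult_right_mono power_mono) auto
    also have "\<dots> \<le> (1 - real r / real (n - t)) * real ((n - t) choose r)"
      using IH(1) f_nn Suc.prems by (intro mult_left_mono) (auto simp: of_nat_diff)
    finally show "(1 - real r / real (n - Suc t)) ^ Suc t * real (n choose r) \<le> real ((n - Suc t) choose r)"
      using step by simp
  next
    have "real ((n - Suc t) choose r) \<le> (1 - real r / real (n - t)) * ((1 - real r / n) ^ t * real (n choose r))"
      using step IH(2) f_nn by (simp add: mult_left_mono)
    also have "\<dots> \<le> (1 - real r / n) * ((1 - real r / n) ^ t * real (n choose r))"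
      using f_up h_nn by (intro mult_right_mono) auto
    finally show "real ((n - Suc t) choose r) \<le> (1 - real r / real n) ^ Suc t * real (n choose r)" by simp
  qed
qed simp

lemma one_minus_le_exp_pow:
  assumes "0 \<le> (y::real)" "y \<le> 1" shows "(1 - y) ^ t \<le> exp (- (y * t))"
proof -
  have "(1 - y) ^ t \<le> exp (-y) ^ t"
    using assms by (intro power_mono) (auto simp: exp_ge_add_one_self[of "-y", simplified])
  also have "\<dots> = exp (- (y * t))" by (simp add: exp_of_nat_mult[symmetric] mult.commute)
  finally show ?thesis .
qed

lemma one_minus_ge_exp_pow:
  assumes "0 \<le> (y::real)" "y \<le> 1/2" shows "exp (- ((y + 2*y^2) * t)) \<le> (1 - y) ^ t"
proof -
  have "- y - 2 * y^2 \<le> ln (1 - y)"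
    using ln_one_minus_pos_lower_bound[of y] assms by (simp add: power2_eq_square)
  hence "exp (- y - 2*y^2) \<le> 1 - y" using assms by (metis exp_le_cancel_iff exp_ln diff_gt_0_iff_gt
      le_less_trans less_numeral_extra(1) one_less_numeral_iff semiring_norm(76) divide_less_eq_1_pos
      zero_less_numeral)
  hence "exp (- y - 2*y^2) ^ t \<le> (1 - y) ^ t" by (intro power_mono) auto
  moreover have "exp (- y - 2*y^2) ^ t = exp (- ((y + 2*y^2) * t))"
    by (simp add: exp_of_nat_mult[symmetric] algebra_simps)
  ultimately show ?thesis by simp
qed

lemma marg_prob_upper:
  assumes mk: "k + 2 \<le> m" and mN: "m \<le> N" and ks: "k \<le> s"
  shows "marg_prob k N m s \<le> (real m / N)^k * (1 - real (m - 1 - k) / real (N - 1 - k)) ^ (s - k)"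
proof -
  define n r t where "n = N - 1 - k" and "r = m - 1 - k" and "t = s - k"
  define C where "C = real ((N-1) choose (m-1))"
  have C: "0 < C" using mk mN by (simp add: C_def)
  have Pm: "marg_prob k N m s = real ((n - t) choose r) / C"
    using ks by (simp add: marg_prob_def n_def r_def t_def C_def)
  have R: "real (n choose r) \<le> (real m / N)^k * C"
    using choose_ratio_bounds[of m N k] mk mN by (simp add: n_def r_def C_def)
  have r1: "1 \<le> r" and rn: "r \<le> n" using mk mN by (auto simp: r_def n_def)
  have y: "0 \<le> 1 - real r / n" using rn by (cases "n = 0") (auto simp: field_simps)
  have "real ((n - t) choose r) \<le> (1 - real r / n) ^ t * ((real m / N)^k * C)"
  proof (cases "t + r \<le> n")
    case True
    have "real ((n - t) choose r) \<le> (1 - real r / n) ^ t * real (n choose r)"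
      using choose_shift_bounds[OF True r1] by simp
    also have "\<dots> \<le> (1 - real r / n) ^ t * ((real m / N)^k * C)"
      using R y by (intro mult_left_mono) auto
    finally show ?thesis .
  next
    case False
    hence "n - t < r" using r1 by arith
    hence "(n - t) choose r = 0" by (simp add: binomial_eq_0)
    moreover have "0 \<le> (1 - real r / n) ^ t * ((real m / N)^k * C)" using y C by simp
    ultimately show ?thesis by (simp only: of_nat_0)
  qed
  thus ?thesis using C unfolding Pm by (simp add: divide_le_eq n_def r_def t_def mult_ac)
qed

lemma marg_prob_lower:
  assumes mk: "k + 2 \<le> m" and sm: "s + m \<le> N + k" and ks: "k \<le> s"
  shows "((real m - k) / N)^k * (1 - real (m - 1 - k) / real (N - 1 - s)) ^ (s - k) \<le> marg_prob k N m s"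
proof -
  define n r t where "n = N - 1 - k" and "r = m - 1 - k" and "t = s - k"
  define C where "C = real ((N-1) choose (m-1))"
  have mN: "m \<le> N" using sm ks by simp
  have C: "0 < C" using mk mN by (simp add: C_def)
  have tr: "t + r \<le> n" and r1: "1 \<le> r" using sm ks mk by (auto simp: n_def r_def t_def)
  have nt: "n - t = N - 1 - s" using ks mk sm by (simp add: n_def t_def)
  have Pm: "marg_prob k N m s = real ((n - t) choose r) / C"
    using ks by (simp add: marg_prob_def n_def r_def t_def C_def)
  have R: "((real m - k) / N)^k * C \<le> real (n choose r)"
    using choose_ratio_bounds[of m N k] mk mN by (simp add: n_def r_def C_def)
  have y: "0 \<le> 1 - real r / real (n - t)" using tr r1 by (simp add: field_simps)
  have "(1 - real r / real (n - t)) ^ t * (((real m - k) / N)^k * C) \<le> (1 - real r / real (n - t)) ^ t * real (n choose r)"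
    using R y by (intro mult_left_mono) auto
  also have "\<dots> \<le> real ((n - t) choose r)" using choose_shift_bounds[OF tr r1] by simp
  finally show ?thesis using C unfolding Pm nt by (simp add: le_divide_eq n_def r_def t_def mult_ac)
qed

lemma marg_prob_tail:
  assumes mk: "2*k+2 \<le> m" and mN: "m \<le> N" and ks: "k \<le> s"
  shows "marg_prob k N m s \<le> (real m / N)^k * exp (- ((real s - k) * (real m / N) / 2))"
proof -
  define y where "y = real (m - 1 - k) / real (N - 1 - k)"
  have npos: "0 < real (N - 1 - k)" using mk mN by simp
  have y: "0 \<le> y" "y \<le> 1" using mk mN npos by (auto simp: y_def divide_simps)
  have "real m / 2 / N \<le> y" unfolding y_def using mk mN npos by (intro frac_le) (auto simp: of_nat_diff)
  hence "(real m / 2 / N) * real (s - k) \<le> y * real (s - k)" by (intro mult_right_mono) auto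
  hence "(real s - k) * (real m / N) / 2 \<le> y * real (s - k)"
    using ks by (simp add: mult.commute)
  hence "(1 - y) ^ (s - k) \<le> exp (- ((real s - k) * (real m / N) / 2))"
    using one_minus_le_exp_pow[OF y, of "s - k"] by (smt (verit) exp_le_cancel_iff)
  hence "(real m / N)^k * (1 - y) ^ (s - k) \<le> (real m / N)^k * exp (- ((real s - k) * (real m / N) / 2))"
    by (intro mult_left_mono) auto
  thus ?thesis using marg_prob_upper[of k m N s] assms unfolding y_def by linarith
qed

lemma local_regime:
  fixes k N m s :: nat and T \<delta> :: real
  assumes T0: "0 \<le> T" and d0: "0 < \<delta>" and dsmall: "(k + 1 + T) * \<delta> \<le> 1/4"
    and m1: "1 \<le> m * \<delta>" and mN: "m \<le> \<delta> * N" and sT: "s * m \<le> T * N"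
  shows "2*k+2 \<le> m" and "real s \<le> T * \<delta> * N" and "real s + real m + 1 \<le> N"
proof -
  have mpos: "0 < real m" using m1 d0 by (cases "m = 0") auto
  have "4 * (k + 1 + T) * \<delta> \<le> m * \<delta>" using dsmall m1 by linarith
  hence "4 * (k + 1 + T) \<le> m" using d0 by simp
  moreover have "real (2*k+2) \<le> 4 * (k + 1 + T)" using T0 by simp
  ultimately have "real (2*k+2) \<le> real m" by linarith
  thus "2*k+2 \<le> m" by (simp only: of_nat_le_iff)
  have "real s \<le> T * N / m" using sT mpos by (simp add: field_simps)
  also have "\<dots> = T * N * (1 / m)" by simp
  also have "\<dots> \<le> T * N * \<delta>"
    using m1 mpos T0 by (intro mult_left_mono) (auto simp: divide_le_eq mult.commute)
  finally show s: "real s \<le> T * \<delta> * N" by (simp add: mult_ac)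
  have "1 \<le> real m" using mpos by (cases m) auto
  hence "1 \<le> \<delta> * N" using mN by linarith
  hence "real s + real m + 1 \<le> ((T + 1) * \<delta> + \<delta>) * N" using s mN by (simp add: algebra_simps)
  also have "\<dots> \<le> N"
  proof -
    have "real k * \<delta> + T * \<delta> + \<delta> \<le> 1/4" using dsmall by (simp add: algebra_simps)
    moreover have "(T + 1) * \<delta> + \<delta> = T * \<delta> + 2 * \<delta>" by (simp add: algebra_simps)
    moreover have "0 \<le> real k * \<delta>" "0 \<le> T * \<delta>" using d0 T0 by auto
    ultimately have "(T + 1) * \<delta> + \<delta> \<le> 1" using d0 by linarith
    thus ?thesis using d0 T0 by (intro mult_left_le_one_le) auto
  qed
  finally show "real s + real m + 1 \<le> N" .
qed

lemma marg_prob_local_upper: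
  fixes k N m s :: nat and T \<delta> :: real
  assumes T0: "0 \<le> T" and d0: "0 < \<delta>" and dsmall: "(k + 1 + T) * \<delta> \<le> 1/4"
    and m1: "1 \<le> m * \<delta>" and mN: "m \<le> \<delta> * N" and sT: "s * m \<le> T * N" and ks: "k \<le> s"
  shows "marg_prob k N m s * (real N / m)^k * exp (s * m / N) \<le> exp ((k + (k+1)*T) * \<delta>)"
proof -
  note regime = local_regime[OF T0 d0 dsmall m1 mN sT]
  define v y where "v = real m / N" and "y = real (m - 1 - k) / real (N - 1 - k)"
  define t where "t = s - k"
  have Npos: "0 < real N" and mpos: "0 < real m" using regime by auto
  have v: "0 \<le> v" "v \<le> \<delta>" using mN Npos by (auto simp: v_def field_simps)
  have nk: "0 < real (N - 1 - k)" using regime by simp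
  have y: "0 \<le> y" "y \<le> 1" using regime nk by (auto simp: y_def field_simps)
  have st: "real s = real k + real t" using ks by (simp add: t_def)
  have Nm: "(real N / m)^k * (real m / N)^k = 1" using mpos Npos by (simp flip: power_mult_distrib)
  have "marg_prob k N m s * (real N / m)^k \<le> (1 - y) ^ t * ((real m / N)^k * (real N / m)^k)"
    using marg_prob_upper[of k m N s] regime ks by (simp add: y_def t_def mult_right_mono mult_ac)
  also have "\<dots> \<le> exp (- (y * t))" using one_minus_le_exp_pow[OF y] Nm by (simp add: mult.commute)
  finally have P: "marg_prob k N m s * (real N / m)^k \<le> exp (- (y * t))" .
  have "v - (k + 1) / N \<le> y"
  proof -
    have "v - (k + 1) / N = real (m - 1 - k) / N" using regime Npos by (simp add: v_def field_simps)
    also have "\<dots> \<le> y" unfolding y_def using nk by (intro divide_left_mono) auto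
    finally show ?thesis .
  qed
  hence "s * v - y * t \<le> s * v - (v - (k + 1) / N) * t" by (intro diff_left_mono mult_right_mono) auto
  also have "\<dots> = k * v + (k + 1) * (t / N)" unfolding st by (simp add: algebra_simps)
  also have "\<dots> \<le> k * \<delta> + (k + 1) * (T * \<delta>)"
  proof (intro add_mono mult_left_mono)
    have "t / N \<le> s / N" using st Npos by (simp add: divide_right_mono)
    also have "\<dots> \<le> T * \<delta>" using regime(2) Npos by (simp add: divide_le_eq mult_ac)
    finally show "t / N \<le> T * \<delta>" .
  qed (use v in auto)
  finally have E: "s * v - y * t \<le> (k + (k+1)*T) * \<delta>" by (simp add: algebra_simps)
  have "marg_prob k N m s * (real N / m)^k * exp (s * m / N) \<le> exp (- (y * t)) * exp (s * v)"
    using P by (simp add: v_def mult_right_mono)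
  also have "\<dots> = exp (s * v - y * t)" by (simp add: exp_add[symmetric])
  also have "\<dots> \<le> exp ((k + (k+1)*T) * \<delta>)" using E by simp
  finally show ?thesis .
qed

lemma divide_one_minus_le:
  fixes v z :: real
  assumes v: "0 \<le> v" and z: "0 \<le> z" "z \<le> 1/2"
  shows "v / (1 - z) \<le> v * (1 + 2*z)"
proof -
  have "0 \<le> z * (1 - 2*z)" using z by (intro mult_nonneg_nonneg) auto
  moreover have "(1 + 2*z) * (1 - z) = 1 + z * (1 - 2*z)" by (simp add: algebra_simps)
  ultimately have "1 \<le> (1 + 2*z) * (1 - z)" by linarith
  hence "v * 1 \<le> v * ((1 + 2*z) * (1 - z))" using v by (intro mult_left_mono) auto
  thus ?thesis using z by (simp add: divide_le_eq mult.assoc)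
qed

lemma perturbed_exponent_lower:
  fixes s t v y z \<delta> T :: real
  assumes v: "0 \<le> v" "v \<le> \<delta>" and z: "0 \<le> z" and y: "0 \<le> y" "y \<le> v * (1 + 2*z)" "y \<le> 2 * v"
    and tv: "t * v \<le> T" and t: "0 \<le> t" "t \<le> s"
  shows "- (2 * z * T + 8 * \<delta> * T) \<le> s * v - (y + 2*y^2) * t"
proof -
  have "(y - v) * t \<le> (2 * z * v) * t" using y t by (intro mult_right_mono) (auto simp: algebra_simps)
  also have "\<dots> = (2 * z) * (t * v)" by (simp only: mult_ac)
  also have "\<dots> \<le> 2 * z * T" using tv z by (intro mult_left_mono) auto
  finally have A: "(y - v) * t \<le> 2 * z * T" .
  have "2 * y^2 * t \<le> 2 * (2 * v)^2 * t" using y t by (intro mult_right_mono mult_left_mono power_mono) auto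
  also have "\<dots> = 8 * v * (t * v)" by (simp add: power2_eq_square algebra_simps)
  also have "\<dots> \<le> 8 * \<delta> * T" using v tv t by (intro mult_mono) auto
  finally have B: "2 * y^2 * t \<le> 8 * \<delta> * T" .
  have "s * v - (y + 2*y^2) * t = (s - t) * v - (y - v) * t - 2 * y^2 * t" by (simp add: algebra_simps)
  moreover have "0 \<le> (s - t) * v" using t v by simp
  ultimately show ?thesis using A B by linarith
qed

lemma marg_prob_local_lower:
  fixes k N m s :: nat and T \<delta> :: real
  assumes T0: "0 \<le> T" and d0: "0 < \<delta>" and dsmall: "(k + 1 + T) * \<delta> \<le> 1/4"
    and m1: "1 \<le> m * \<delta>" and mN: "m \<le> \<delta> * N" and sT: "s * m \<le> T * N" and ks: "k \<le> s"
  shows "(1 - k*\<delta>)^k * exp (- ((2*T*(T+1) + 8*T) * \<delta>)) \<le> marg_prob k N m s * (real N / m)^k * exp (s * m / N)"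
proof -
  note regime = local_regime[OF T0 d0 dsmall m1 mN sT]
  define v y z where "v = real m / N" and "y = real (m - 1 - k) / real (N - 1 - s)" and "z = (T + 1) * \<delta>"
  define t where "t = s - k"
  have Npos: "0 < real N" and mpos: "0 < real m" using regime by auto
  have v: "0 \<le> v" "v \<le> \<delta>" using mN Npos by (auto simp: v_def field_simps)
  have st: "real s = real k + real t" using ks by (simp add: t_def)
  have "real k * \<delta> + T * \<delta> + \<delta> \<le> 1/4" using dsmall by (simp add: algebra_simps)
  moreover have "0 \<le> real k * \<delta>" "0 \<le> T * \<delta>" using d0 T0 by auto
  ultimately have kd: "k * \<delta> \<le> 1/4" and Td: "T * \<delta> + \<delta> \<le> 1/4" and d4: "\<delta> \<le> 1/4"
    using d0 by linarith+
  have "z = T * \<delta> + \<delta>" by (simp add: z_def algebra_simps)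
  hence z: "0 \<le> z" "z \<le> 1/4" using Td T0 d0 by auto
  have y0: "0 \<le> y" by (simp add: y_def)
  have y_up: "y \<le> v * (1 + 2*z)"
  proof -
    have "1 \<le> real m" using mpos by (cases m) auto
    hence "1 \<le> \<delta> * N" using mN by linarith
    moreover have "z * N = T * \<delta> * N + \<delta> * N" by (simp add: z_def algebra_simps)
    moreover have "real (N - 1 - s) = real N - 1 - real s" using regime by (simp add: of_nat_diff)
    ultimately have "(1 - z) * N \<le> real (N - 1 - s)" using regime(2) by (simp add: algebra_simps)
    moreover have "0 < (1 - z) * N" using z Npos by simp
    ultimately have "y \<le> real m / ((1 - z) * N)" unfolding y_def using regime by (intro frac_le) auto
    also have "\<dots> = v / (1 - z)" by (simp add: v_def)
    also have "\<dots> \<le> v * (1 + 2*z)" using v z by (intro divide_one_minus_le) auto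
    finally show ?thesis .
  qed
  have "v * (1 + 2*z) \<le> v * 2" using v z by (intro mult_left_mono) auto
  hence y2v: "y \<le> 2 * v" using y_up by linarith
  have mk_frac: "0 \<le> (real m - k) / m" using regime(1) by simp
  have "1 - k*\<delta> \<le> (real m - k) / m"
  proof -
    have "1 / m \<le> \<delta>" using m1 mpos by (simp add: divide_le_eq mult.commute)
    hence "real k * (1 / m) \<le> real k * \<delta>" by (intro mult_left_mono) auto
    thus ?thesis using mpos by (simp add: diff_divide_distrib)
  qed
  hence A: "(1 - k*\<delta>)^k \<le> ((real m - k) / m)^k" using kd by (intro power_mono) auto
  have B: "exp (- ((y + 2*y^2) * t)) \<le> (1 - y) ^ t"
    using y2v v d4 by (intro one_minus_ge_exp_pow y0) linarith
  have "(1 - k*\<delta>)^k * exp (- ((y + 2*y^2) * t)) \<le> ((real m - k) / m)^k * (1 - y) ^ t"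
    using mk_frac by (intro mult_mono[OF A B]) auto
  also have "\<dots> = (((real m - k) / N)^k * (real N / m)^k) * (1 - y) ^ t"
  proof -
    have "(real m - k) / N * (real N / m) = (real m - k) / m" using Npos by simp
    hence "((real m - k) / N)^k * (real N / m)^k = ((real m - k) / m)^k" by (metis power_mult_distrib)
    thus ?thesis by simp
  qed
  also have "\<dots> = ((real m - k) / N)^k * (1 - y) ^ t * (real N / m)^k" by (simp only: mult_ac)
  also have "\<dots> \<le> marg_prob k N m s * (real N / m)^k"
    using marg_prob_lower[of k m s N] regime ks by (intro mult_right_mono) (auto simp: y_def t_def)
  finally have P: "(1 - k*\<delta>)^k * exp (- ((y + 2*y^2) * t)) \<le> marg_prob k N m s * (real N / m)^k" .
  have tv: "t * v \<le> T"
  proof -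
    have "t * v \<le> s * v" using st v by (intro mult_right_mono) auto
    also have "\<dots> \<le> T" using sT Npos by (simp add: v_def divide_simps)
    finally show ?thesis .
  qed
  have "- (2 * z * T + 8 * \<delta> * T) \<le> s * v - (y + 2*y^2) * t"
    using v z y0 y_up y2v tv st by (intro perturbed_exponent_lower) auto
  moreover have "(2*T*(T+1) + 8*T) * \<delta> = 2 * z * T + 8 * \<delta> * T" by (simp add: z_def algebra_simps)
  ultimately have E: "- ((2*T*(T+1) + 8*T) * \<delta>) \<le> s * v - (y + 2*y^2) * t" by simp
  have "(1 - k*\<delta>)^k * exp (- ((2*T*(T+1) + 8*T) * \<delta>))
      \<le> (1 - k*\<delta>)^k * exp (- ((y + 2*y^2) * t)) * exp (s * v)"
    using E kd by (simp add: mult.assoc exp_add[symmetric])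
  also have "\<dots> \<le> marg_prob k N m s * (real N / m)^k * exp (s * m / N)"
    using P by (simp add: v_def mult_right_mono)
  finally show ?thesis .
qed

lemma small_scale_exists:
  fixes T \<epsilon> :: real and k :: nat
  assumes "0 \<le> T" "0 < \<epsilon>"
  shows "\<exists>\<delta>>0. (k + 1 + T) * \<delta> \<le> 1/4 \<and> 1 - \<epsilon> < (1 - real k * \<delta>)^k * exp (- ((2*T*(T+1) + 8*T) * \<delta>))
           \<and> exp ((k + (k+1)*T) * \<delta>) < 1 + \<epsilon>"
proof -
  define lower upper where
    "lower = (\<lambda>\<delta>::real. (1 - k*\<delta>)^k * exp (- ((2*T*(T+1) + 8*T) * \<delta>)))" and
    "upper = (\<lambda>\<delta>::real. exp ((k + (k+1)*T) * \<delta>))"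
  have "(lower \<longlongrightarrow> lower 0) (at_right 0)" "(upper \<longlongrightarrow> upper 0) (at_right 0)"
    "((\<lambda>\<delta>::real. (k + 1 + T) * \<delta>) \<longlongrightarrow> (k + 1 + T) * 0) (at_right 0)"
    unfolding lower_def upper_def by (intro tendsto_intros)+
  note lims = this
  have "eventually (\<lambda>\<delta>. 1 - \<epsilon> < lower \<delta>) (at_right 0)"
    using order_tendstoD(1)[OF lims(1), of "1 - \<epsilon>"] assms by (simp add: lower_def)
  moreover have "eventually (\<lambda>\<delta>. upper \<delta> < 1 + \<epsilon>) (at_right 0)"
    using order_tendstoD(2)[OF lims(2), of "1 + \<epsilon>"] assms by (simp add: upper_def)
  moreover have "eventually (\<lambda>\<delta>. (k + 1 + T) * \<delta> < 1/4) (at_right 0)"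
    using order_tendstoD(2)[OF lims(3), of "1/4"] by simp
  ultimately have "eventually (\<lambda>\<delta>. 1 - \<epsilon> < lower \<delta> \<and> upper \<delta> < 1 + \<epsilon> \<and> (k + 1 + T) * \<delta> < 1/4) (at_right (0::real))"
    by eventually_elim auto
  then obtain b where b: "b > 0" "\<And>\<delta>. 0 < \<delta> \<Longrightarrow> \<delta> < b \<Longrightarrow> 1 - \<epsilon> < lower \<delta> \<and> upper \<delta> < 1 + \<epsilon> \<and> (k + 1 + T) * \<delta> < 1/4"
    unfolding eventually_at_right_field by auto
  have "1 - \<epsilon> < lower (b/2) \<and> upper (b/2) < 1 + \<epsilon> \<and> (k + 1 + T) * (b/2) < 1/4"
    by (rule b(2)) (use b(1) in auto)
  hence "0 < b/2 \<and> (k + 1 + T) * (b/2) \<le> 1/4 \<and> 1 - \<epsilon> < lower (b/2) \<and> upper (b/2) < 1 + \<epsilon>"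
    using b(1) by linarith
  thus ?thesis unfolding lower_def upper_def by blast
qed

lemma marg_prob_local_limit:
  fixes k :: nat and T \<eta> :: real
  assumes T0: "0 \<le> T" and \<eta>: "0 < \<eta>"
  shows "\<exists>\<delta>>(0::real). \<forall>N m s. 1 \<le> m * \<delta> \<and> m \<le> \<delta> * N \<and> k \<le> s \<and> real (s * m) \<le> T * N \<longrightarrow>
           \<bar>marg_prob k N m s * (real N / m)^k * exp (real (s * m) / N) - 1\<bar> < \<eta>"
proof -
  obtain \<delta> where d0: "0 < \<delta>" and dsmall: "(k + 1 + T) * \<delta> \<le> 1/4"
    and lo: "1 - \<eta> < (1 - real k * \<delta>)^k * exp (- ((2*T*(T+1) + 8*T) * \<delta>))"
    and up: "exp ((k + (k+1)*T) * \<delta>) < 1 + \<eta>"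
    using small_scale_exists[OF T0 \<eta>] by blast
  have close: "\<forall>N m s. 1 \<le> m * \<delta> \<and> m \<le> \<delta> * N \<and> k \<le> s \<and> real (s * m) \<le> T * N \<longrightarrow>
           \<bar>marg_prob k N m s * (real N / m)^k * exp (real (s * m) / N) - 1\<bar> < \<eta>"
  proof (intro allI impI)
    fix N m s :: nat assume H: "1 \<le> m * \<delta> \<and> m \<le> \<delta> * N \<and> k \<le> s \<and> real (s * m) \<le> T * N"
    show "\<bar>marg_prob k N m s * (real N / m)^k * exp (real (s * m) / N) - 1\<bar> < \<eta>"
    proof -
      from H have h: "1 \<le> m * \<delta>" "m \<le> \<delta> * N" "k \<le> s" "real (s * m) \<le> T * N" by auto
      note lower = marg_prob_local_lower[OF T0 d0 dsmall h(1,2,4,3)]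
      note upper = marg_prob_local_upper[OF T0 d0 dsmall h(1,2,4,3)]
      show ?thesis using lower upper lo up by linarith
    qed
  qed
  show ?thesis by (rule exI[of _ \<delta>], rule conjI[OF d0 close])
qed

section \<open>Riemann sums on the lattice grid of mesh 1/mu\<close>

definition grid_tag :: "real \<Rightarrow> ('j::finite \<Rightarrow> nat) \<Rightarrow> real^'j" where
  "grid_tag \<mu> a = (\<chi> i. real (a i) / \<mu>)"

definition grid_cell :: "real \<Rightarrow> ('j::finite \<Rightarrow> nat) \<Rightarrow> (real^'j) set" where
  "grid_cell \<mu> a = cbox (\<chi> i. (real (a i) - 1) / \<mu>) (\<chi> i. real (a i) / \<mu>)"

definition grid_division :: "real \<Rightarrow> nat \<Rightarrow> ((real^'j::finite) \<times> (real^'j) set) set" where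
  "grid_division \<mu> L = (\<lambda>a. (grid_tag \<mu> a, grid_cell \<mu> a)) ` lattice_cube L"

lemma mem_grid_cell:
  "0 < \<mu> \<Longrightarrow> x \<in> grid_cell \<mu> a \<longleftrightarrow> (\<forall>i. (real (a i) - 1) / \<mu> \<le> x$i \<and> x$i \<le> real (a i) / \<mu>)"
  unfolding grid_cell_def by (simp add: mem_box_cart)

lemma grid_tag_in_cell: "0 < \<mu> \<Longrightarrow> grid_tag \<mu> a \<in> grid_cell \<mu> a"
  by (simp add: mem_grid_cell grid_tag_def divide_right_mono)

lemma grid_tag_in_orthant: "0 < \<mu> \<Longrightarrow> grid_tag \<mu> a \<in> orthant"
  by (simp add: orthant_def grid_tag_def)

lemma sum_grid_tag: "(\<Sum>i\<in>UNIV. grid_tag \<mu> a $ i) = real (sum a UNIV) / \<mu>"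
  unfolding grid_tag_def by (simp add: sum_divide_distrib)

lemma content_grid_cell:
  assumes "0 < \<mu>" shows "measure lborel (grid_cell \<mu> (a::'j::finite \<Rightarrow> nat)) = (1/\<mu>) ^ CARD('j)"
proof -
  have "measure lborel (grid_cell \<mu> a) = (\<Prod>i\<in>UNIV. real (a i) / \<mu> - (real (a i) - 1) / \<mu>)"
    using grid_tag_in_cell[OF assms, of a] unfolding grid_cell_def by (subst content_cbox_cart) auto
  also have "\<dots> = (\<Prod>i\<in>(UNIV::'j set). 1/\<mu>)" by (intro prod.cong) (auto simp: diff_divide_distrib)
  finally show ?thesis by simp
qed

lemma grid_cell_l1_close:
  assumes mu: "0 < \<mu>" and y: "y \<in> grid_cell \<mu> (a::'j::finite \<Rightarrow> nat)"
  shows "(\<Sum>i\<in>UNIV. \<bar>grid_tag \<mu> a $ i - y $ i\<bar>) \<le> CARD('j) / \<mu>"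
proof -
  have "\<bar>grid_tag \<mu> a $ i - y $ i\<bar> \<le> 1 / \<mu>" for i
  proof -
    have "(real (a i) - 1) / \<mu> \<le> y$i" "y$i \<le> real (a i) / \<mu>" using y mem_grid_cell[OF mu] by auto
    moreover have "real (a i) / \<mu> - (real (a i) - 1) / \<mu> = 1 / \<mu>" by (simp add: diff_divide_distrib)
    ultimately show ?thesis by (simp add: grid_tag_def abs_le_iff)
  qed
  hence "(\<Sum>i\<in>UNIV. \<bar>grid_tag \<mu> a $ i - y $ i\<bar>) \<le> (\<Sum>i\<in>(UNIV::'j set). 1 / \<mu>)" by (intro sum_mono)
  thus ?thesis by simp
qed

lemma grid_cells_disjoint:
  assumes mu: "0 < \<mu>" and ne: "a \<noteq> b"
  shows "interior (grid_cell \<mu> a) \<inter> interior (grid_cell \<mu> (b::'j::finite \<Rightarrow> nat)) = {}"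
proof (rule ccontr)
  obtain i where i: "a i \<noteq> b i" using ne by auto
  assume "interior (grid_cell \<mu> a) \<inter> interior (grid_cell \<mu> b) \<noteq> {}"
  then obtain x where "x \<in> box (\<chi> i. (real (a i) - 1) / \<mu>) (\<chi> i. real (a i) / \<mu>)"
                      "x \<in> box (\<chi> i. (real (b i) - 1) / \<mu>) (\<chi> i. real (b i) / \<mu>)"
    unfolding grid_cell_def by auto
  hence "(real (a i) - 1) / \<mu> < x$i" "x$i < real (a i) / \<mu>"
    "(real (b i) - 1) / \<mu> < x$i" "x$i < real (b i) / \<mu>" by (auto simp: mem_box_cart)
  hence "(real (a i) - 1) / \<mu> < real (b i) / \<mu>" "(real (b i) - 1) / \<mu> < real (a i) / \<mu>" by linarith+
  hence "real (a i) - 1 < real (b i)" "real (b i) - 1 < real (a i)" using mu by (simp_all add: divide_less_cancel)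
  thus False using i by linarith
qed

lemma grid_cell_subset_box:
  assumes mu: "0 < \<mu>" and a: "a \<in> lattice_cube L"
  shows "grid_cell \<mu> a \<subseteq> cbox 0 (\<chi> i. real L / \<mu>)"
proof
  fix y assume "y \<in> grid_cell \<mu> a"
  hence y: "(real (a i) - 1) / \<mu> \<le> y$i \<and> y$i \<le> real (a i) / \<mu>" for i using mem_grid_cell[OF mu] by auto
  have "0 \<le> y$i \<and> y$i \<le> real L / \<mu>" for i
  proof -
    have ai: "1 \<le> a i" "a i \<le> L" using a by (auto simp: PiE_iff)
    hence "0 \<le> (real (a i) - 1) / \<mu>" "real (a i) / \<mu> \<le> real L / \<mu>" using mu by (auto simp: divide_right_mono)
    thus ?thesis using y[of i] by linarith
  qed
  thus "y \<in> cbox 0 (\<chi> i. real L / \<mu>)" by (simp add: mem_box_cart)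
qed

text \<open>Every point of the box [0, L/mu] lies in some cell: round mu y up coordinatewise.\<close>
lemma grid_cells_cover:
  assumes mu: "0 < \<mu>" and L: "1 \<le> L" and y: "y \<in> cbox 0 (\<chi> i. real L / \<mu>)"
  shows "\<exists>a\<in>lattice_cube L. y \<in> grid_cell \<mu> (a::'j::finite \<Rightarrow> nat)"
proof -
  define a where "a i = max 1 (nat \<lceil>\<mu> * y$i\<rceil>)" for i
  have cell: "(real (a i) - 1) / \<mu> \<le> y$i \<and> y$i \<le> real (a i) / \<mu> \<and> a i \<in> {1..L}" for i
  proof -
    have yi: "0 \<le> \<mu> * y$i" "\<mu> * y$i \<le> real L"
      using y mu by (auto simp: mem_box_cart mult.commute pos_le_divide_eq)
    have ai: "real (a i) = max 1 (of_int \<lceil>\<mu> * y$i\<rceil>)" using yi(1) by (simp add: a_def)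
    have "\<mu> * y$i \<le> of_int \<lceil>\<mu> * y$i\<rceil>" "of_int \<lceil>\<mu> * y$i\<rceil> < \<mu> * y$i + 1"
      by (rule le_of_int_ceiling) linarith
    hence "real (a i) - 1 \<le> \<mu> * y$i" "\<mu> * y$i \<le> real (a i)" unfolding ai using yi(1)
      by (auto simp: max_def)
    moreover have "a i \<le> L"
    proof -
      have "\<lceil>\<mu> * y$i\<rceil> \<le> int L" using yi(2) by (intro ceiling_le) simp
      thus ?thesis using L yi(2) by (simp add: a_def)
    qed
    ultimately have "real (a i) - 1 \<le> \<mu> * y$i" "\<mu> * y$i \<le> real (a i)" "a i \<le> L" by blast+
    thus ?thesis using mu by (auto simp: pos_divide_le_eq pos_le_divide_eq mult.commute a_def)
  qed
  hence "a \<in> lattice_cube L" by auto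
  moreover have "y \<in> grid_cell \<mu> a" using cell mem_grid_cell[OF mu] by blast
  ultimately show ?thesis by blast
qed

lemma grid_division_tagged_division:
  assumes mu: "0 < \<mu>" and L: "1 \<le> L"
  shows "(grid_division \<mu> L :: ((real^'j::finite) \<times> _) set) tagged_division_of cbox 0 (\<chi> i. real L / \<mu>)"
proof (rule tagged_division_ofI)
  show "finite (grid_division \<mu> L :: ((real^'j) \<times> _) set)" by (simp add: grid_division_def finite_PiE)
  show "\<Union>{K. \<exists>x. (x, K) \<in> (grid_division \<mu> L :: ((real^'j) \<times> _) set)} = cbox 0 (\<chi> i. real L / \<mu>)"
  proof
    show "\<Union>{K. \<exists>x. (x, K) \<in> (grid_division \<mu> L :: ((real^'j) \<times> _) set)} \<subseteq> cbox 0 (\<chi> i. real L / \<mu>)"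
      using grid_cell_subset_box[OF mu] by (auto simp: grid_division_def)
    show "cbox 0 (\<chi> i. real L / \<mu>) \<subseteq> \<Union>{K. \<exists>x. (x, K) \<in> (grid_division \<mu> L :: ((real^'j) \<times> _) set)}"
    proof
      fix y :: "real^'j" assume "y \<in> cbox 0 (\<chi> i. real L / \<mu>)"
      then obtain a where "a \<in> lattice_cube L" "y \<in> grid_cell \<mu> a" using grid_cells_cover[OF mu L] by blast
      thus "y \<in> \<Union>{K. \<exists>x. (x, K) \<in> grid_division \<mu> L}" unfolding grid_division_def by blast
    qed
  qed
next
  fix x K assume "(x, K) \<in> (grid_division \<mu> L :: ((real^'j) \<times> _) set)"
  then obtain a where a: "a \<in> lattice_cube L" "x = grid_tag \<mu> a" "K = grid_cell \<mu> a"
    unfolding grid_division_def by auto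
  show "x \<in> K" using a grid_tag_in_cell[OF mu] by simp
  show "\<exists>a b. K = cbox a b" using a unfolding grid_cell_def by blast
  show "K \<subseteq> cbox 0 (\<chi> i. real L / \<mu>)" using a grid_cell_subset_box[OF mu] by simp
next
  fix x1 K1 x2 K2
  assume "(x1, K1) \<in> (grid_division \<mu> L :: ((real^'j) \<times> _) set)" "(x2, K2) \<in> grid_division \<mu> L"
    and ne: "(x1, K1) \<noteq> (x2, K2)"
  then obtain a b where "x1 = grid_tag \<mu> a" "K1 = grid_cell \<mu> a" "x2 = grid_tag \<mu> b" "K2 = grid_cell \<mu> b"
    unfolding grid_division_def by auto
  moreover from this ne have "a \<noteq> b" by auto
  ultimately show "interior K1 \<inter> interior K2 = {}" using grid_cells_disjoint[OF mu] by simp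
qed

lemma sum_grid_division:
  assumes mu: "0 < \<mu>"
  shows "(\<Sum>(x,K)\<in>(grid_division \<mu> L :: ((real^'j::finite) \<times> _) set). F x K)
           = (\<Sum>a\<in>lattice_cube L. F (grid_tag \<mu> a) (grid_cell \<mu> a))"
proof -
  have "inj_on (\<lambda>a. (grid_tag \<mu> a, grid_cell \<mu> (a::'j \<Rightarrow> nat))) (lattice_cube L)"
    using mu by (auto simp: inj_on_def grid_tag_def fun_eq_iff vec_eq_iff)
  thus ?thesis unfolding grid_division_def by (subst sum.reindex) simp_all
qed

lemma riemann_integrable_onD:
  fixes g :: "'a::euclidean_space \<Rightarrow> real"
  assumes "riemann_integrable_on g (cbox a b)"
  shows "g integrable_on cbox a b"
    and "\<forall>e>0. \<exists>\<delta>>0. \<forall>D. D tagged_division_of cbox a b \<and> (\<lambda>x. ball x \<delta>) fine D \<longrightarrow>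
           \<bar>(\<Sum>(x,K)\<in>D. measure lborel K * g x) - integral (cbox a b) g\<bar> < e"
proof -
  obtain I where I: "\<forall>e>0. \<exists>\<delta>>0. \<forall>D. D tagged_division_of cbox a b \<and> (\<lambda>x. ball x \<delta>) fine D \<longrightarrow>
        \<bar>(\<Sum>(x,K)\<in>D. measure lborel K * g x) - I\<bar> < e"
    using assms unfolding riemann_integrable_on_def by blast
  have "(g has_integral I) (cbox a b)"
    unfolding has_integral
  proof (intro allI impI)
    fix e :: real assume "0 < e"
    then obtain \<delta> where "\<delta> > 0" and "\<forall>D. D tagged_division_of cbox a b \<and> (\<lambda>x. ball x \<delta>) fine D \<longrightarrow>
        \<bar>(\<Sum>(x,K)\<in>D. measure lborel K * g x) - I\<bar> < e" using I by blast
    thus "\<exists>\<gamma>. gauge \<gamma> \<and> (\<forall>\<D>. \<D> tagged_division_of cbox a b \<and> \<gamma> fine \<D> \<longrightarrow>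
           norm ((\<Sum>(x, k)\<in>\<D>. measure lborel k *\<^sub>R g x) - I) < e)"
      by (intro exI[of _ "\<lambda>x. ball x \<delta>"]) auto
  qed
  thus "g integrable_on cbox a b" by blast
  show "\<forall>e>0. \<exists>\<delta>>0. \<forall>D. D tagged_division_of cbox a b \<and> (\<lambda>x. ball x \<delta>) fine D \<longrightarrow>
           \<bar>(\<Sum>(x,K)\<in>D. measure lborel K * g x) - integral (cbox a b) g\<bar> < e"
    using I integral_unique[OF \<open>(g has_integral I) (cbox a b)\<close>] by simp
qed

text \<open>For fine grids the lattice Riemann sum matches the integral cell by cell, in l1
  (Henstock's lemma applied to the grid division of a sub-box of [0,K]^j).\<close>
lemma grid_sum_approximates_cell_integrals:
  fixes g :: "real^'j::finite \<Rightarrow> real"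
  assumes g: "riemann_integrable_on g (cbox 0 (\<chi> i. K))" and \<epsilon>: "0 < \<epsilon>"
  shows "\<exists>\<mu>0>0. \<forall>\<mu> L. \<mu>0 \<le> \<mu> \<and> 1 \<le> L \<and> real L / \<mu> \<le> K \<longrightarrow>
           (\<Sum>a\<in>lattice_cube L. \<bar>(1/\<mu>)^CARD('j) * g (grid_tag \<mu> a) - integral (grid_cell \<mu> a) g\<bar>) \<le> \<epsilon>"
proof -
  let ?B = "cbox 0 (\<chi> i. K) :: (real^'j) set"
  obtain \<delta> where \<delta>: "\<delta> > 0" and close: "\<forall>D. D tagged_division_of ?B \<and> (\<lambda>x. ball x \<delta>) fine D \<longrightarrow>
        \<bar>(\<Sum>(x,K)\<in>D. measure lborel K * g x) - integral ?B g\<bar> < \<epsilon>/2"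
    using riemann_integrable_onD(2)[OF g] \<epsilon> by (meson half_gt_zero)
  define \<mu>0 where "\<mu>0 = (CARD('j) + 1) / \<delta>"
  have "\<forall>\<mu> L. \<mu>0 \<le> \<mu> \<and> 1 \<le> L \<and> real L / \<mu> \<le> K \<longrightarrow>
           (\<Sum>a\<in>lattice_cube L. \<bar>(1/\<mu>)^CARD('j) * g (grid_tag \<mu> a) - integral (grid_cell \<mu> a) g\<bar>) \<le> \<epsilon>"
  proof (intro allI impI)
    fix \<mu> :: real and L :: nat assume H: "\<mu>0 \<le> \<mu> \<and> 1 \<le> L \<and> real L / \<mu> \<le> K"
    have "0 < \<mu>0" using \<delta> by (simp add: \<mu>0_def)
    hence mu: "0 < \<mu>" using H by linarith
    have "CARD('j) + 1 \<le> \<mu> * \<delta>" using H \<delta> by (simp add: \<mu>0_def divide_le_eq)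
    hence mesh: "CARD('j) / \<mu> < \<delta>" using mu by (simp add: divide_less_eq mult.commute)
    let ?D = "grid_division \<mu> L :: ((real^'j) \<times> _) set"
    have "?D tagged_partial_division_of ?B"
    proof -
      have "cbox 0 (\<chi> i. real L / \<mu>) \<subseteq> ?B" using H by (auto simp: mem_box_cart) (meson order_trans)
      thus ?thesis using grid_division_tagged_division[OF mu, of L] H
        unfolding tagged_division_of_def tagged_partial_division_of_def by blast
    qed
    moreover have "(\<lambda>x. ball x \<delta>) fine ?D"
    proof (rule fineI)
      fix x C assume "(x, C) \<in> ?D"
      then obtain a where a: "x = grid_tag \<mu> a" "C = grid_cell \<mu> a" by (auto simp: grid_division_def)
      show "C \<subseteq> ball x \<delta>"
      proof
        fix y assume "y \<in> C"
        have "dist x y \<le> (\<Sum>i\<in>UNIV. \<bar>(x - y) $ i\<bar>)" unfolding dist_norm by (rule norm_le_l1_cart)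
        also have "\<dots> \<le> CARD('j) / \<mu>" using grid_cell_l1_close[OF mu] \<open>y \<in> C\<close> a by simp
        finally show "y \<in> ball x \<delta>" using mesh by simp
      qed
    qed
    ultimately have "(\<Sum>(x,C)\<in>?D. norm (measure lborel C *\<^sub>R g x - integral C g)) \<le> 2 * real DIM(real) * (\<epsilon>/2)"
    proof (intro Henstock_lemma_part2[OF riemann_integrable_onD(1)[OF g]])
      fix D assume "D tagged_division_of ?B" "(\<lambda>x. ball x \<delta>) fine D"
      thus "norm ((\<Sum>(x,C)\<in>D. measure lborel C *\<^sub>R g x) - integral ?B g) < \<epsilon>/2"
        using close by simp
    qed (use \<epsilon> \<delta> in auto)
    thus "(\<Sum>a\<in>lattice_cube L. \<bar>(1/\<mu>)^CARD('j) * g (grid_tag \<mu> a) - integral (grid_cell \<mu> a) g\<bar>) \<le> \<epsilon>"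
      by (simp add: sum_grid_division[OF mu] content_grid_cell[OF mu])
  qed
  moreover have "0 < \<mu>0" using \<delta> by (simp add: \<mu>0_def)
  ultimately show ?thesis by blast
qed

definition exp_weight :: "real^'j::finite \<Rightarrow> real" where
  "exp_weight x = exp (- (\<Sum>i\<in>UNIV. x$i))"

lemma orthant_sum_nonneg: "x \<in> orthant \<Longrightarrow> 0 \<le> (\<Sum>i\<in>UNIV. x$i)"
  unfolding orthant_def by (intro sum_nonneg) auto

lemma box_in_orthant: "cbox 0 c \<subseteq> (orthant :: (real^'j::finite) set)"
  unfolding orthant_def by (auto simp: mem_box_cart)

lemma exp_weight_le_one: "x \<in> orthant \<Longrightarrow> exp_weight x \<le> 1"
  using orthant_sum_nonneg by (simp add: exp_weight_def)

lemma exp_weight_grid_tag: "exp_weight (grid_tag \<mu> a) = exp (- (real (sum a UNIV) / \<mu>))"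
  by (simp add: exp_weight_def sum_grid_tag)

lemma exp_neg_lipschitz:
  fixes s1 s2 :: real
  assumes "0 \<le> s1" "0 \<le> s2"
  shows "\<bar>exp (- s1) - exp (- s2)\<bar> \<le> \<bar>s1 - s2\<bar>"
proof -
  have key: "exp (- a) - exp (- b) \<le> b - a" if "0 \<le> a" "a \<le> b" for a b :: real
  proof -
    have "exp (- a) - exp (- b) = exp (- a) * (1 - exp (a - b))"
      by (simp add: algebra_simps flip: exp_add)
    also have "\<dots> \<le> 1 * (b - a)"
    proof (rule mult_mono)
      show "1 - exp (a - b) \<le> b - a" using exp_ge_add_one_self[of "a - b"] by linarith
    qed (use that in auto)
    finally show ?thesis by simp
  qed
  show ?thesis using key[OF assms(1)] key[OF assms(2)] by (cases "s1 \<le> s2") auto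
qed

lemma integrable_mult_continuous:
  fixes g h :: "real^'j::finite \<Rightarrow> real"
  assumes gi: "g integrable_on cbox a b" and gnn: "\<forall>x\<in>cbox a b. 0 \<le> g x"
    and hc: "continuous_on (cbox a b) h"
  shows "(\<lambda>x. g x * h x) integrable_on cbox a b"
proof -
  have "g absolutely_integrable_on cbox a b"
    using gi gnn by (intro nonnegative_absolutely_integrable) auto
  moreover have "h \<in> borel_measurable (lebesgue_on (cbox a b))"
    by (intro continuous_imp_measurable_on_sets_lebesgue hc) simp
  moreover have "bounded (h ` cbox a b)"
    by (intro compact_imp_bounded compact_continuous_image hc) simp
  ultimately have "(\<lambda>x. h x * g x) absolutely_integrable_on cbox a b"
    by (intro absolutely_integrable_bounded_measurable_product[OF bilinear_times]) auto
  thus ?thesis by (simp add: absolutely_integrable_on_def mult.commute)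
qed

lemma integrable_mult_exp_weight:
  fixes g :: "real^'j::finite \<Rightarrow> real"
  assumes "g integrable_on cbox a b" "\<forall>x\<in>cbox a b. 0 \<le> g x"
  shows "(\<lambda>x. g x * exp_weight x) integrable_on cbox a b"
  using assms by (intro integrable_mult_continuous) (auto simp: exp_weight_def intro!: continuous_intros)

lemma integral_grid_box:
  fixes f :: "real^'j::finite \<Rightarrow> real"
  assumes mu: "0 < \<mu>" and L: "1 \<le> L" and f: "f integrable_on cbox 0 (\<chi> i. real L / \<mu>)"
  shows "integral (cbox 0 (\<chi> i. real L / \<mu>)) f = (\<Sum>a\<in>lattice_cube L. integral (grid_cell \<mu> a) f)"
  using integral_combine_tagged_division_topdown[OF f grid_division_tagged_division[OF mu L]]
  by (simp add: sum_grid_division[OF mu])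

text \<open>Replacing the weight by its value at the tag costs at most CARD('j)/mu relative error
  per cell, since the weight is 1-Lipschitz for the l1 norm on the orthant.\<close>
lemma grid_weight_exchange:
  fixes g :: "real^'j::finite \<Rightarrow> real"
  assumes mu: "0 < \<mu>" and L: "1 \<le> L" and gi: "g integrable_on cbox 0 (\<chi> i. real L / \<mu>)"
    and gnn: "\<forall>x\<in>orthant. 0 \<le> g x"
  shows "(\<Sum>a\<in>lattice_cube L. \<bar>exp_weight (grid_tag \<mu> a) * integral (grid_cell \<mu> a) g
            - integral (grid_cell \<mu> a) (\<lambda>x. g x * exp_weight x)\<bar>)
         \<le> CARD('j) / \<mu> * integral (cbox 0 (\<chi> i. real L / \<mu>)) g"
proof -
  have cell_bound: "\<bar>exp_weight (grid_tag \<mu> a) * integral (grid_cell \<mu> a) g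
            - integral (grid_cell \<mu> a) (\<lambda>x. g x * exp_weight x)\<bar> \<le> CARD('j) / \<mu> * integral (grid_cell \<mu> a) g"
    if a: "a \<in> lattice_cube L" for a
  proof -
    let ?t = "grid_tag \<mu> a" and ?C = "grid_cell \<mu> a"
    have C: "?C \<subseteq> orthant" using grid_cell_subset_box[OF mu a] box_in_orthant by blast
    have gC: "g integrable_on ?C"
      using gi grid_cell_subset_box[OF mu a] unfolding grid_cell_def by (rule integrable_on_subcbox)
    have i1: "(\<lambda>y. g y * exp_weight ?t) integrable_on ?C" using gC by (rule integrable_on_mult_left)
    have i2: "(\<lambda>y. g y * exp_weight y) integrable_on ?C"
      using gC gnn C unfolding grid_cell_def by (intro integrable_mult_exp_weight) auto
    have "exp_weight ?t * integral ?C g - integral ?C (\<lambda>x. g x * exp_weight x)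
        = integral ?C (\<lambda>y. g y * exp_weight ?t - g y * exp_weight y)"
      using integral_diff[OF i1 i2] by (simp add: mult.commute)
    also have "\<bar>\<dots>\<bar> \<le> integral ?C (\<lambda>y. g y * (CARD('j) / \<mu>))"
    proof (rule integral_norm_bound_integral[OF integrable_diff[OF i1 i2], unfolded real_norm_def])
      show "(\<lambda>y. g y * (CARD('j) / \<mu>)) integrable_on ?C" using gC by (rule integrable_on_mult_left)
      fix y assume y: "y \<in> ?C"
      have "\<bar>exp_weight ?t - exp_weight y\<bar> \<le> \<bar>(\<Sum>i\<in>UNIV. ?t $ i) - (\<Sum>i\<in>UNIV. y $ i)\<bar>"
        unfolding exp_weight_def using C y grid_tag_in_orthant[OF mu]
        by (intro exp_neg_lipschitz orthant_sum_nonneg) auto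
      also have "\<dots> \<le> (\<Sum>i\<in>UNIV. \<bar>?t $ i - y $ i\<bar>)" by (simp add: sum_subtractf[symmetric] sum_abs)
      also have "\<dots> \<le> CARD('j) / \<mu>" by (rule grid_cell_l1_close[OF mu y])
      finally have w: "\<bar>exp_weight ?t - exp_weight y\<bar> \<le> CARD('j) / \<mu>" .
      have gy: "0 \<le> g y" using gnn C y by blast
      hence "\<bar>g y * exp_weight ?t - g y * exp_weight y\<bar> = g y * \<bar>exp_weight ?t - exp_weight y\<bar>"
        by (simp add: abs_mult flip: right_diff_distrib)
      thus "\<bar>g y * exp_weight ?t - g y * exp_weight y\<bar> \<le> g y * (CARD('j) / \<mu>)"
        using mult_left_mono[OF w gy] by simp
    qed
    finally show ?thesis by (simp add: mult.commute)
  qed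
  have "(\<Sum>a\<in>lattice_cube L. \<bar>exp_weight (grid_tag \<mu> a) * integral (grid_cell \<mu> a) g
            - integral (grid_cell \<mu> a) (\<lambda>x. g x * exp_weight x)\<bar>)
        \<le> (\<Sum>a\<in>lattice_cube L. CARD('j) / \<mu> * integral (grid_cell \<mu> a) g)"
    by (intro sum_mono cell_bound)
  also have "\<dots> = CARD('j) / \<mu> * integral (cbox 0 (\<chi> i. real L / \<mu>)) g"
    by (simp add: integral_grid_box[OF mu L gi] sum_distrib_left)
  finally show ?thesis .
qed

definition weighted_grid_sum :: "(real^'j::finite \<Rightarrow> real) \<Rightarrow> real \<Rightarrow> nat \<Rightarrow> real" where
  "weighted_grid_sum g \<mu> L =
     (\<Sum>a\<in>lattice_cube L. g (grid_tag \<mu> a) * exp_weight (grid_tag \<mu> a)) * (1/\<mu>)^CARD('j)"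

lemma weighted_grid_sum_error:
  fixes g :: "real^'j::finite \<Rightarrow> real"
  assumes mu: "0 < \<mu>" and L: "1 \<le> L" and gi: "g integrable_on cbox 0 (\<chi> i. real L / \<mu>)"
    and gnn: "\<forall>x\<in>orthant. 0 \<le> g x"
  shows "\<bar>weighted_grid_sum g \<mu> L - integral (cbox 0 (\<chi> i. real L / \<mu>)) (\<lambda>x. g x * exp_weight x)\<bar>
    \<le> (\<Sum>a\<in>lattice_cube L. \<bar>(1/\<mu>)^CARD('j) * g (grid_tag \<mu> a) - integral (grid_cell \<mu> a) g\<bar>)
       + CARD('j) / \<mu> * integral (cbox 0 (\<chi> i. real L / \<mu>)) g"
proof -
  let ?k = "CARD('j)" and ?B = "cbox 0 (\<chi> i. real L / \<mu>) :: (real^'j) set"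
  let ?t = "grid_tag \<mu>" and ?C = "grid_cell \<mu>"
  have gwi: "(\<lambda>x. g x * exp_weight x) integrable_on ?B"
    using gi gnn box_in_orthant by (intro integrable_mult_exp_weight) auto
  have split: "weighted_grid_sum g \<mu> L - integral ?B (\<lambda>x. g x * exp_weight x)
      = (\<Sum>a\<in>lattice_cube L. exp_weight (?t a) * ((1/\<mu>)^?k * g (?t a) - integral (?C a) g))
      + (\<Sum>a\<in>lattice_cube L. exp_weight (?t a) * integral (?C a) g - integral (?C a) (\<lambda>x. g x * exp_weight x))"
    unfolding weighted_grid_sum_def integral_grid_box[OF mu L gwi] sum_distrib_right
    by (simp add: sum_subtractf[symmetric] sum.distrib[symmetric] algebra_simps)
  have "\<bar>\<Sum>a\<in>lattice_cube L. exp_weight (?t a) * ((1/\<mu>)^?k * g (?t a) - integral (?C a) g)\<bar>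
      \<le> (\<Sum>a\<in>lattice_cube L. \<bar>(1/\<mu>)^?k * g (?t a) - integral (?C a) g\<bar>)"
  proof (intro order_trans[OF sum_abs] sum_mono)
    fix a :: "'j \<Rightarrow> nat"
    have "0 \<le> exp_weight (?t a)" "exp_weight (?t a) \<le> 1"
      using exp_weight_le_one[OF grid_tag_in_orthant[OF mu]] by (auto simp: exp_weight_def)
    thus "\<bar>exp_weight (?t a) * ((1/\<mu>)^?k * g (?t a) - integral (?C a) g)\<bar>
        \<le> \<bar>(1/\<mu>)^?k * g (?t a) - integral (?C a) g\<bar>"
      unfolding abs_mult by (intro mult_left_le_one_le) auto
  qed
  moreover have "\<bar>\<Sum>a\<in>lattice_cube L. exp_weight (?t a) * integral (?C a) g - integral (?C a) (\<lambda>x. g x * exp_weight x)\<bar>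
      \<le> ?k / \<mu> * integral ?B g"
    by (intro order_trans[OF sum_abs] grid_weight_exchange[OF mu L gi gnn])
  ultimately show ?thesis unfolding split by linarith
qed

lemma weighted_grid_sum_converges:
  fixes g :: "real^'j::finite \<Rightarrow> real"
  assumes g: "riemann_integrable_on g (cbox 0 (\<chi> i. K))" and gnn: "\<forall>x\<in>orthant. 0 \<le> g x"
    and \<epsilon>: "0 < \<epsilon>"
  shows "\<exists>\<mu>0>0. \<forall>\<mu> L. \<mu>0 \<le> \<mu> \<and> 1 \<le> L \<and> real L / \<mu> \<le> K \<longrightarrow>
     \<bar>weighted_grid_sum g \<mu> L - integral (cbox 0 (\<chi> i. real L / \<mu>)) (\<lambda>x. g x * exp_weight x)\<bar> \<le> \<epsilon>"
proof -
  let ?k = "CARD('j)" and ?B = "cbox 0 (\<chi> i. K) :: (real^'j) set"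
  define J where "J = integral ?B g"
  have gB: "g integrable_on ?B" by (rule riemann_integrable_onD(1)[OF g])
  have J: "0 \<le> J" unfolding J_def using gB gnn box_in_orthant by (intro integral_nonneg) auto
  obtain \<mu>1 where \<mu>1: "0 < \<mu>1" and cells: "\<forall>\<mu> L. \<mu>1 \<le> \<mu> \<and> 1 \<le> L \<and> real L / \<mu> \<le> K \<longrightarrow>
      (\<Sum>a\<in>lattice_cube L. \<bar>(1/\<mu>)^?k * g (grid_tag \<mu> a) - integral (grid_cell \<mu> a) g\<bar>) \<le> \<epsilon>/2"
    using grid_sum_approximates_cell_integrals[OF g, of "\<epsilon>/2"] \<epsilon> by auto
  define \<mu>0 where "\<mu>0 = \<mu>1 + 2 * ?k * (J + 1) / \<epsilon>"
  have \<mu>0: "\<mu>1 \<le> \<mu>0" "2 * ?k * (J + 1) / \<epsilon> \<le> \<mu>0" using \<epsilon> J \<mu>1 by (auto simp: \<mu>0_def)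
  have "\<forall>\<mu> L. \<mu>0 \<le> \<mu> \<and> 1 \<le> L \<and> real L / \<mu> \<le> K \<longrightarrow>
     \<bar>weighted_grid_sum g \<mu> L - integral (cbox 0 (\<chi> i. real L / \<mu>)) (\<lambda>x. g x * exp_weight x)\<bar> \<le> \<epsilon>"
  proof (intro allI impI)
    fix \<mu> :: real and L :: nat assume H: "\<mu>0 \<le> \<mu> \<and> 1 \<le> L \<and> real L / \<mu> \<le> K"
    have mu: "0 < \<mu>" using H \<mu>0 \<mu>1 by linarith
    let ?B' = "cbox 0 (\<chi> i. real L / \<mu>) :: (real^'j) set"
    have B'B: "?B' \<subseteq> ?B" using H by (auto simp: mem_box_cart) (meson order_trans)
    have gB': "g integrable_on ?B'" using gB B'B by (rule integrable_on_subcbox)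
    have "?k / \<mu> * integral ?B' g \<le> ?k / \<mu> * J"
      unfolding J_def using gB' gB B'B gnn box_in_orthant mu
      by (intro mult_left_mono integral_subset_le) auto
    also have "\<dots> \<le> \<epsilon>/2"
    proof -
      have "2 * ?k * (J + 1) / \<epsilon> \<le> \<mu>" using H \<mu>0 by linarith
      hence "2 * ?k * (J + 1) \<le> \<mu> * \<epsilon>" using \<epsilon> by (simp add: divide_le_eq)
      moreover have "2 * ?k * J \<le> 2 * ?k * (J + 1)" by simp
      ultimately have "2 * ?k * J \<le> \<mu> * \<epsilon>" by linarith
      thus ?thesis using mu by (simp add: field_simps)
    qed
    finally have weights: "?k / \<mu> * integral ?B' g \<le> \<epsilon>/2" .
    have tags: "(\<Sum>a\<in>lattice_cube L. \<bar>(1/\<mu>)^?k * g (grid_tag \<mu> a) - integral (grid_cell \<mu> a) g\<bar>) \<le> \<epsilon>/2"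
      using cells H \<mu>0 by auto
    have "1 \<le> L" using H by simp
    from weighted_grid_sum_error[OF mu this gB' gnn] tags weights
    show "\<bar>weighted_grid_sum g \<mu> L - integral ?B' (\<lambda>x. g x * exp_weight x)\<bar> \<le> \<epsilon>" by linarith
  qed
  moreover have "0 < \<mu>0" using \<mu>0 \<mu>1 by linarith
  ultimately show ?thesis by blast
qed

section \<open>The weighted integral over the orthant\<close>

lemma pow0_le_exp:
  assumes d: "0 \<le> d"
  shows "\<exists>c>0. \<forall>s\<ge>0. pow0 s d \<le> c * exp (s / 8)"
proof (cases "d = 0")
  case True thus ?thesis unfolding pow0_def by (intro exI[of _ 1]) auto
next
  case False
  hence dpos: "0 < d" using d by simp
  define c where "c = exp (d * ln (8 * d))"
  have "pow0 s d \<le> c * exp (s / 8)" if s: "0 < s" for s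
  proof -
    have "d * ln (s / (8 * d)) \<le> d * (s / (8 * d) - 1)"
      using s dpos by (intro mult_left_mono ln_le_minus_one) auto
    also have "\<dots> = s / 8 - d" using dpos by (simp add: field_simps)
    finally have "d * ln s \<le> d * ln (8 * d) + s / 8"
      using s dpos by (simp add: ln_div algebra_simps)
    thus ?thesis using s False by (simp add: pow0_def c_def powr_def flip: exp_add)
  qed
  moreover have "pow0 0 d \<le> c * exp (0 / 8)" using False by (simp add: pow0_def c_def)
  ultimately show ?thesis by (metis c_def exp_gt_zero order.not_eq_order_implies_strict)
qed

lemma geometric_grid_sum_1d:
  fixes \<mu> c :: real
  assumes mu: "0 < \<mu>" and c: "0 < c"
  shows "(\<Sum>t\<in>{1..L}. exp (- (c * real t / \<mu>)) / \<mu>) \<le> 1 / c"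
proof -
  define q where "q = exp (- (c / \<mu>))"
  have q: "0 < q" "q < 1" unfolding q_def using mu c by auto
  have "(1 - q) * (\<Sum>t\<in>{1..L}. q ^ t) \<le> q"
  proof (cases "L = 0")
    case False
    hence "(1 - q) * (\<Sum>t\<in>{1..L}. q ^ t) = q ^ 1 - q ^ Suc L" by (intro sum_gp_multiplied) simp
    thus ?thesis using q by simp
  qed (use q in auto)
  hence "(\<Sum>t\<in>{1..L}. q ^ t) \<le> q / (1 - q)" using q by (simp add: le_divide_eq mult.commute)
  also have "\<dots> = 1 / (exp (c / \<mu>) - 1)" using q by (simp add: q_def exp_minus field_simps)
  also have "\<dots> \<le> 1 / (c / \<mu>)"
  proof -
    have "c / \<mu> \<le> exp (c / \<mu>) - 1" using exp_ge_add_one_self[of "c/\<mu>"] by linarith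
    thus ?thesis using mu c by (intro frac_le) auto
  qed
  also have "\<dots> = \<mu> / c" by simp
  finally have "(\<Sum>t\<in>{1..L}. q ^ t) / \<mu> \<le> 1 / c" using mu c by (simp add: divide_le_eq mult.commute)
  moreover have "exp (- (c * real t / \<mu>)) = q ^ t" for t
    by (simp add: q_def flip: exp_of_nat_mult)
  ultimately show ?thesis by (simp add: sum_divide_distrib)
qed

text \<open>The lattice sum factorizes over the coordinates.\<close>
lemma geometric_grid_sum:
  fixes \<mu> c :: real
  assumes mu: "0 < \<mu>" and c: "0 < c"
  shows "(\<Sum>a\<in>(lattice_cube L :: ('j::finite \<Rightarrow> nat) set). exp (- (c * real (sum a UNIV) / \<mu>)) * (1/\<mu>)^CARD('j))
           \<le> (1/c)^CARD('j)"
proof -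
  have factor: "exp (- (c * real (sum a UNIV) / \<mu>)) * (1/\<mu>)^CARD('j) = (\<Prod>i\<in>(UNIV::'j set). exp (- (c * real (a i) / \<mu>)) / \<mu>)"
    for a :: "'j \<Rightarrow> nat"
  proof -
    have "exp (- (c * real (sum a UNIV) / \<mu>)) = exp (\<Sum>i\<in>(UNIV::'j set). - (c * real (a i) / \<mu>))"
      by (simp add: sum_divide_distrib sum_distrib_left sum_negf)
    also have "\<dots> = (\<Prod>i\<in>(UNIV::'j set). exp (- (c * real (a i) / \<mu>)))" by (rule exp_sum) simp
    finally show ?thesis by (simp add: prod.distrib prod_dividef divide_inverse)
  qed
  have "(\<Sum>a\<in>(lattice_cube L :: ('j \<Rightarrow> nat) set). exp (- (c * real (sum a UNIV) / \<mu>)) * (1/\<mu>)^CARD('j))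
      = (\<Sum>a\<in>(lattice_cube L :: ('j \<Rightarrow> nat) set). \<Prod>i\<in>UNIV. exp (- (c * real (a i) / \<mu>)) / \<mu>)"
    by (rule sum.cong[OF refl factor])
  also have "\<dots> = (\<Prod>i\<in>(UNIV::'j set). \<Sum>t\<in>{1..L}. exp (- (c * real t / \<mu>)) / \<mu>)"
    by (rule prod_sum_PiE[symmetric]) auto
  also have "\<dots> = (\<Sum>t\<in>{1..L}. exp (- (c * real t / \<mu>)) / \<mu>) ^ CARD('j)" by simp
  also have "\<dots> \<le> (1/c) ^ CARD('j)"
    using mu by (intro power_mono geometric_grid_sum_1d mu c sum_nonneg) auto
  finally show ?thesis .
qed

lemma weighted_grid_sum_bound:
  fixes g :: "real^'j::finite \<Rightarrow> real"
  assumes mu: "0 < \<mu>" and G: "0 \<le> G" and gG: "\<forall>x\<in>orthant. g x \<le> G * exp ((\<Sum>i\<in>UNIV. x$i) / 8)"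
  shows "weighted_grid_sum g \<mu> L \<le> G * (8/7)^CARD('j)"
proof -
  have term_bound: "g (grid_tag \<mu> a) * exp_weight (grid_tag \<mu> a) \<le> G * exp (- ((7/8) * real (sum a UNIV) / \<mu>))"
    for a :: "'j \<Rightarrow> nat"
  proof -
    have "g (grid_tag \<mu> a) \<le> G * exp ((\<Sum>i\<in>UNIV. grid_tag \<mu> a $ i) / 8)"
      using gG grid_tag_in_orthant[OF mu] by blast
    hence "g (grid_tag \<mu> a) \<le> G * exp (real (sum a UNIV) / \<mu> / 8)" by (simp only: sum_grid_tag)
    hence "g (grid_tag \<mu> a) * exp_weight (grid_tag \<mu> a) \<le> G * exp (real (sum a UNIV) / \<mu> / 8) * exp (- (real (sum a UNIV) / \<mu>))"
      by (simp add: exp_weight_grid_tag)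
    thus ?thesis by (simp add: mult.assoc flip: exp_add)
  qed
  have "(\<Sum>a\<in>lattice_cube L. g (grid_tag \<mu> a) * exp_weight (grid_tag \<mu> a))
      \<le> (\<Sum>a\<in>lattice_cube L. G * exp (- ((7/8) * real (sum (a :: 'j \<Rightarrow> nat) UNIV) / \<mu>)))"
    by (rule sum_mono) (rule term_bound)
  hence "weighted_grid_sum g \<mu> L \<le> (\<Sum>a\<in>lattice_cube L. G * exp (- ((7/8) * real (sum (a :: 'j \<Rightarrow> nat) UNIV) / \<mu>))) * (1/\<mu>)^CARD('j)"
    unfolding weighted_grid_sum_def using mu by (intro mult_right_mono) auto
  also have "\<dots> = G * (\<Sum>a\<in>lattice_cube L. exp (- ((7/8) * real (sum (a :: 'j \<Rightarrow> nat) UNIV) / \<mu>)) * (1/\<mu>)^CARD('j))"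
    by (simp add: sum_distrib_left sum_distrib_right mult.assoc)
  also have "\<dots> \<le> G * (1/(7/8))^CARD('j)" using G by (intro mult_left_mono geometric_grid_sum mu) auto
  finally show ?thesis by simp
qed

text \<open>A nonnegative function with uniformly bounded integrals over the boxes [0,n]^j is
  integrable over the orthant, and these box integrals converge to the orthant integral
  (monotone convergence).\<close>
lemma integrable_orthant_exhaustion:
  fixes f :: "real^'j::finite \<Rightarrow> real"
  assumes fi: "\<And>n::nat. f integrable_on cbox 0 (\<chi> i. real n)" and fnn: "\<forall>x\<in>orthant. 0 \<le> f x"
    and bd: "\<And>n::nat. integral (cbox 0 (\<chi> i. real n)) f \<le> B"
  shows "f integrable_on orthant"
    and "(\<lambda>n. integral (cbox 0 (\<chi> i. real n)) f) \<longlonglongrightarrow> integral orthant f"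
proof -
  define h where "h n x = (if x \<in> cbox 0 (\<chi> i. real n) then f x else 0)" for n :: nat and x :: "real^'j"
  have box: "cbox 0 (\<chi> i. real n) \<inter> orthant = (cbox 0 (\<chi> i. real n) :: (real^'j) set)" for n :: nat
    using box_in_orthant by blast
  have hi: "h n integrable_on orthant" for n
    unfolding h_def integrable_restrict_Int box by (rule fi)
  have hint: "integral orthant (h n) = integral (cbox 0 (\<chi> i. real n)) f" for n
    unfolding h_def integral_restrict_Int box ..
  have mono: "h n x \<le> h (Suc n) x" if "x \<in> orthant" for n x
  proof -
    have "x \<in> cbox 0 (\<chi> i. real n) \<Longrightarrow> x \<in> cbox 0 (\<chi> i. real (Suc n))"
      by (auto simp: mem_box_cart) (meson le_add_same_cancel2 order_trans zero_le_one)
    thus ?thesis using fnn that unfolding h_def by auto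
  qed
  have lim: "(\<lambda>n. h n x) \<longlonglongrightarrow> f x" if x: "x \<in> orthant" for x
  proof (rule tendsto_eventually)
    obtain n0 :: nat where n0: "(\<Sum>i\<in>UNIV. x$i) \<le> real n0" using real_arch_simple by blast
    have "x \<in> cbox 0 (\<chi> i. real n)" if "n \<ge> n0" for n
    proof -
      have "x$i \<le> (\<Sum>i\<in>UNIV. x$i)" for i using x unfolding orthant_def by (intro member_le_sum) auto
      hence "x$i \<le> real n" for i using n0 that by (meson of_nat_le_iff order_trans)
      thus ?thesis using x unfolding orthant_def by (auto simp: mem_box_cart)
    qed
    thus "eventually (\<lambda>n. h n x = f x) sequentially" unfolding h_def eventually_sequentially by auto
  qed
  have "bounded (range (\<lambda>n. integral orthant (h n)))"
  proof -
    have "0 \<le> integral orthant (h n)" for n using hi fnn unfolding h_def by (intro integral_nonneg) auto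
    thus ?thesis using bd unfolding bounded_iff hint by (intro exI[of _ B]) auto
  qed
  from monotone_convergence_increasing[OF hi mono lim this]
  show "f integrable_on orthant" "(\<lambda>n. integral (cbox 0 (\<chi> i. real n)) f) \<longlonglongrightarrow> integral orthant f"
    unfolding hint by auto
qed

lemma weighted_integrable_box:
  fixes g :: "real^'j::finite \<Rightarrow> real"
  assumes gr: "\<forall>a b. a \<in> orthant \<longrightarrow> riemann_integrable_on g (cbox a b)" and gnn: "\<forall>x\<in>orthant. 0 \<le> g x"
  shows "(\<lambda>x. g x * exp_weight x) integrable_on cbox 0 c"
proof -
  have "(0::real^'j) \<in> orthant" by (simp add: orthant_def)
  hence "g integrable_on cbox 0 c" using gr riemann_integrable_onD(1) by blast
  thus ?thesis using gnn box_in_orthant by (intro integrable_mult_exp_weight) auto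
qed

lemma weighted_integral_box_mono:
  fixes g :: "real^'j::finite \<Rightarrow> real"
  assumes gr: "\<forall>a b. a \<in> orthant \<longrightarrow> riemann_integrable_on g (cbox a b)" and gnn: "\<forall>x\<in>orthant. 0 \<le> g x"
    and r: "0 \<le> r1" "r1 \<le> r2"
  shows "integral (cbox 0 (\<chi> i. r1)) (\<lambda>x. g x * exp_weight x) \<le> integral (cbox 0 (\<chi> i. r2)) (\<lambda>x. g x * exp_weight x)"
proof (rule integral_subset_le)
  show "cbox 0 (\<chi> i. r1) \<subseteq> (cbox 0 (\<chi> i. r2) :: (real^'j) set)"
    using r by (auto simp: mem_box_cart) (meson order_trans)
  show "\<forall>x\<in>cbox 0 (\<chi> i. r2). 0 \<le> g x * exp_weight x"
  proof
    fix x :: "real^'j" assume "x \<in> cbox 0 (\<chi> i. r2)"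
    hence "x \<in> orthant" using box_in_orthant by blast
    thus "0 \<le> g x * exp_weight x" using gnn by (simp add: exp_weight_def)
  qed
qed (auto intro: weighted_integrable_box[OF gr gnn])

text \<open>Each box integral is the limit of weighted lattice sums, hence bounded by G (8/7)^k.\<close>
lemma weighted_integral_box_bound:
  fixes g :: "real^'j::finite \<Rightarrow> real"
  assumes gr: "\<forall>a b. a \<in> orthant \<longrightarrow> riemann_integrable_on g (cbox a b)" and gnn: "\<forall>x\<in>orthant. 0 \<le> g x"
    and G: "0 \<le> G" and gG: "\<forall>x\<in>orthant. g x \<le> G * exp ((\<Sum>i\<in>UNIV. x$i) / 8)"
  shows "integral (cbox 0 (\<chi> i. real n)) (\<lambda>x. g x * exp_weight x) \<le> G * (8/7)^CARD('j)"
proof -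
  have "integral (cbox 0 (\<chi> i. real (Suc n))) (\<lambda>x. g x * exp_weight x) \<le> G * (8/7)^CARD('j) + e"
    if e: "0 < e" for e
  proof -
    have "riemann_integrable_on g (cbox 0 (\<chi> i. real (Suc n)))" using gr by (simp add: orthant_def)
    then obtain \<mu>0 where \<mu>0: "0 < \<mu>0" and conv: "\<forall>\<mu> L. \<mu>0 \<le> \<mu> \<and> 1 \<le> L \<and> real L / \<mu> \<le> real (Suc n) \<longrightarrow>
       \<bar>weighted_grid_sum g \<mu> L - integral (cbox 0 (\<chi> i. real L / \<mu>)) (\<lambda>x. g x * exp_weight x)\<bar> \<le> e"
      using weighted_grid_sum_converges[OF _ gnn e] by blast
    obtain p :: nat where p: "\<mu>0 \<le> real p" using real_arch_simple by blast
    have p0: "0 < real p" using p \<mu>0 by linarith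
    have ratio: "real (Suc n * p) / real p = real (Suc n)" using p0 by (simp only: of_nat_mult) simp
    moreover have "1 \<le> Suc n * p" using p0 by simp
    ultimately have "\<mu>0 \<le> real p \<and> 1 \<le> Suc n * p \<and> real (Suc n * p) / real p \<le> real (Suc n)"
      using p by simp
    from conv[rule_format, OF this] ratio
    have "\<bar>weighted_grid_sum g (real p) (Suc n * p) - integral (cbox 0 (\<chi> i. real (Suc n))) (\<lambda>x. g x * exp_weight x)\<bar> \<le> e"
      by simp
    moreover have "weighted_grid_sum g (real p) (Suc n * p) \<le> G * (8/7)^CARD('j)"
      using weighted_grid_sum_bound[OF p0 G gG] .
    ultimately show ?thesis by linarith
  qed
  hence "integral (cbox 0 (\<chi> i. real (Suc n))) (\<lambda>x. g x * exp_weight x) \<le> G * (8/7)^CARD('j)"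
    by (rule field_le_epsilon)
  moreover have "integral (cbox 0 (\<chi> i. real n)) (\<lambda>x. g x * exp_weight x)
      \<le> integral (cbox 0 (\<chi> i. real (Suc n))) (\<lambda>x. g x * exp_weight x)"
    by (rule weighted_integral_box_mono[OF gr gnn]) auto
  ultimately show ?thesis by linarith
qed

lemma weighted_integral_orthant:
  fixes g :: "real^'j::finite \<Rightarrow> real"
  assumes gr: "\<forall>a b. a \<in> orthant \<longrightarrow> riemann_integrable_on g (cbox a b)" and gnn: "\<forall>x\<in>orthant. 0 \<le> g x"
    and G: "0 \<le> G" and gG: "\<forall>x\<in>orthant. g x \<le> G * exp ((\<Sum>i\<in>UNIV. x$i) / 8)"
  shows "(\<lambda>n. integral (cbox 0 (\<chi> i. real n)) (\<lambda>x. g x * exp_weight x))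
           \<longlonglongrightarrow> integral orthant (\<lambda>x. g x * exp_weight x)"
    and "\<And>r. 0 \<le> r \<Longrightarrow> integral (cbox 0 (\<chi> i. r)) (\<lambda>x. g x * exp_weight x) \<le> integral orthant (\<lambda>x. g x * exp_weight x)"
    and "0 \<le> integral orthant (\<lambda>x. g x * exp_weight x)"
proof -
  have gw: "\<forall>x\<in>orthant. 0 \<le> g x * exp_weight x" using gnn by (simp add: exp_weight_def)
  note exhaust = integrable_orthant_exhaustion[OF weighted_integrable_box[OF gr gnn] gw
      weighted_integral_box_bound[OF gr gnn G gG]]
  show "(\<lambda>n. integral (cbox 0 (\<chi> i. real n)) (\<lambda>x. g x * exp_weight x)) \<longlonglongrightarrow> integral orthant (\<lambda>x. g x * exp_weight x)"
    by (rule exhaust(2))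
  show "integral (cbox 0 (\<chi> i. r)) (\<lambda>x. g x * exp_weight x) \<le> integral orthant (\<lambda>x. g x * exp_weight x)"
    if "0 \<le> r" for r
    using gw box_in_orthant by (intro integral_subset_le weighted_integrable_box[OF gr gnn] exhaust(1)) auto
  show "0 \<le> integral orthant (\<lambda>x. g x * exp_weight x)"
    using gw by (intro integral_nonneg exhaust(1)) auto
qed

lemma exp_majorant:
  fixes g :: "real^'j::finite \<Rightarrow> real"
  assumes C: "0 \<le> C" and d: "0 \<le> d" and g_bound: "\<forall>x\<in>orthant. g x \<le> C * pow0 (\<Sum>i\<in>UNIV. x $ i) d"
  shows "\<exists>G\<ge>0. \<forall>x\<in>orthant. g x \<le> G * exp ((\<Sum>i\<in>UNIV. x$i) / 8)"
proof -
  obtain c where c: "0 < c" "\<forall>s\<ge>0. pow0 s d \<le> c * exp (s / 8)" using pow0_le_exp[OF d] by blast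
  have "g x \<le> (C * c) * exp ((\<Sum>i\<in>UNIV. x$i) / 8)" if x: "x \<in> orthant" for x
  proof -
    have "g x \<le> C * pow0 (\<Sum>i\<in>UNIV. x $ i) d" using g_bound x by blast
    also have "\<dots> \<le> C * (c * exp ((\<Sum>i\<in>UNIV. x$i) / 8))"
      using c orthant_sum_nonneg[OF x] C by (intro mult_left_mono) auto
    finally show ?thesis by (simp add: mult.assoc)
  qed
  thus ?thesis using C c by (intro exI[of _ "C * c"]) auto
qed

text \<open>Outside the cube of side L > K mu - 1 a single term of the marginal sum is at most
  G e^{k/2} e^{-K/8} e^{-|a|/(4mu)} mu^{-k}: the majorant grows like e^{|a|/(8mu)} while the
  marginal probability decays like e^{-|a|/(2mu)}.\<close>
lemma marginal_tail_term:
  fixes g :: "real^'j::finite \<Rightarrow> real" and K \<mu> :: real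
  assumes mu1: "1 \<le> \<mu>" and mueq: "\<mu> = real N / real m" and mk: "2 * CARD('j) + 2 \<le> m"
    and mN: "m \<le> N" and G: "0 \<le> G" and gG: "\<forall>x\<in>orthant. g x \<le> G * exp ((\<Sum>i\<in>UNIV. x$i) / 8)"
    and gnn: "\<forall>x\<in>orthant. 0 \<le> g x"
    and KL: "K * \<mu> < real L + 1" and a: "a \<in> lattice_cube N - lattice_cube L"
  shows "g (grid_tag \<mu> a) * marg_prob CARD('j) N m (sum a UNIV)
           \<le> G * exp (CARD('j) / 2) * exp (- (K / 8)) * (exp (- ((1/4) * real (sum a UNIV) / \<mu>)) * (1/\<mu>)^CARD('j))"
proof -
  let ?k = "CARD('j)"
  define s where "s = real (sum a UNIV) / \<mu>"
  have mu: "0 < \<mu>" using mu1 by simp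
  have apos: "1 \<le> a i" for i using a by (auto simp: PiE_iff)
  obtain i where "a i \<notin> {1..L}" using a by (auto simp: PiE_iff)
  hence "real L + 1 \<le> real (a i)" using apos[of i] by simp
  moreover have "real (a i) \<le> real (sum a UNIV)" by (simp only: of_nat_le_iff) (rule member_le_sum, auto)
  ultimately have "K * \<mu> < real (sum a UNIV)" using KL by linarith
  hence sK: "K < s" using mu by (simp add: s_def pos_less_divide_eq)
  have ks: "?k \<le> sum a UNIV" using sum_mono[of UNIV "\<lambda>_. 1" a] apos by simp
  have "g (grid_tag \<mu> a) \<le> G * exp ((\<Sum>i\<in>UNIV. grid_tag \<mu> a $ i) / 8)"
    using gG grid_tag_in_orthant[OF mu] by blast
  also have "\<dots> = G * exp (s / 8)" by (simp add: sum_grid_tag s_def)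
  also have "\<dots> \<le> G * (exp (- (K / 8)) * exp (s / 4))"
    using sK G by (intro mult_left_mono) (simp_all flip: exp_add)
  finally have g_le: "g (grid_tag \<mu> a) \<le> G * (exp (- (K / 8)) * exp (s / 4))" .
  have "marg_prob ?k N m (sum a UNIV) \<le> (1/\<mu>)^?k * exp (- ((real (sum a UNIV) - ?k) * (1/\<mu>) / 2))"
    using marg_prob_tail[OF mk mN ks] mueq by simp
  also have "\<dots> \<le> (1/\<mu>)^?k * (exp (?k / 2) * exp (- (s / 2)))"
  proof -
    have "- ((real (sum a UNIV) - ?k) * (1/\<mu>) / 2) = ?k / \<mu> / 2 - s / 2"
      using mu by (simp add: s_def field_simps)
    also have "\<dots> \<le> ?k / 2 - s / 2" using mu1 by (simp add: divide_le_eq field_simps)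
    finally show ?thesis using mu by (intro mult_left_mono) (simp_all flip: exp_add)
  qed
  finally have P_le: "marg_prob ?k N m (sum a UNIV) \<le> (1/\<mu>)^?k * (exp (?k / 2) * exp (- (s / 2)))" .
  have "g (grid_tag \<mu> a) * marg_prob ?k N m (sum a UNIV)
      \<le> (G * (exp (- (K / 8)) * exp (s / 4))) * ((1/\<mu>)^?k * (exp (?k / 2) * exp (- (s / 2))))"
    using g_le P_le G gnn grid_tag_in_orthant[OF mu] marg_prob_nonneg by (intro mult_mono) auto
  also have "\<dots> = G * exp (?k / 2) * exp (- (K / 8)) * (exp (s / 4) * exp (- (s / 2)) * (1/\<mu>)^?k)"
    by (simp only: ac_simps)
  also have "exp (s / 4) * exp (- (s / 2)) = exp (- ((1/4) * real (sum a UNIV) / \<mu>))"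
    by (simp add: s_def flip: exp_add)
  finally show ?thesis .
qed

lemma marginal_tail_sum:
  fixes g :: "real^'j::finite \<Rightarrow> real" and K \<mu> :: real
  assumes mu1: "1 \<le> \<mu>" and mueq: "\<mu> = real N / real m" and mk: "2 * CARD('j) + 2 \<le> m"
    and mN: "m \<le> N" and G: "0 \<le> G" and gG: "\<forall>x\<in>orthant. g x \<le> G * exp ((\<Sum>i\<in>UNIV. x$i) / 8)"
    and gnn: "\<forall>x\<in>orthant. 0 \<le> g x" and KL: "K * \<mu> < real L + 1"
  shows "(\<Sum>a\<in>lattice_cube N - lattice_cube L. g (grid_tag \<mu> a) * marg_prob CARD('j) N m (sum a UNIV))
           \<le> G * 4^CARD('j) * exp (CARD('j) / 2) * exp (- (K / 8))"
proof -
  let ?k = "CARD('j)" and ?c = "G * exp (CARD('j) / 2) * exp (- (K / 8))"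
  let ?w = "\<lambda>a::'j \<Rightarrow> nat. exp (- ((1/4) * real (sum a UNIV) / \<mu>)) * (1/\<mu>)^?k"
  have mu: "0 < \<mu>" using mu1 by simp
  have "(\<Sum>a\<in>lattice_cube N - lattice_cube L. g (grid_tag \<mu> a) * marg_prob ?k N m (sum a UNIV))
      \<le> (\<Sum>a\<in>lattice_cube N - lattice_cube L. ?c * ?w a)"
    by (intro sum_mono marginal_tail_term[OF mu1 mueq mk mN G gG gnn KL])
  also have "\<dots> \<le> (\<Sum>a\<in>lattice_cube N. ?c * ?w a)"
    using G mu by (intro sum_mono2) (auto simp: finite_PiE)
  also have "\<dots> = ?c * (\<Sum>a\<in>lattice_cube N. ?w a)" by (simp add: sum_distrib_left)
  also have "\<dots> \<le> ?c * (1/(1/4))^?k" using G by (intro mult_left_mono geometric_grid_sum mu) auto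
  finally show ?thesis by (simp add: ac_simps)
qed

text \<open>In the local regime the marginal probabilities are within relative error eta of the
  weights e^{-|a|/mu} mu^{-k}, so the local part of the marginal sum is within relative error
  eta of the weighted lattice sum.\<close>
lemma marginal_local_sum:
  fixes g :: "real^'j::finite \<Rightarrow> real" and \<delta> \<eta> T \<mu> :: real
  assumes gnn: "\<forall>x\<in>orthant. 0 \<le> g x"
    and local: "\<forall>N m s. 1 \<le> m * \<delta> \<and> m \<le> \<delta> * N \<and> CARD('j) \<le> s \<and> real (s * m) \<le> T * N \<longrightarrow>
           \<bar>marg_prob CARD('j) N m s * (real N / m)^CARD('j) * exp (real (s * m) / N) - 1\<bar> < \<eta>"
    and mueq: "\<mu> = real N / real m" and m: "1 \<le> m * \<delta>" "m \<le> \<delta> * N" and LT: "CARD('j) * L \<le> T * \<mu>"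
  shows "\<bar>(\<Sum>a\<in>lattice_cube L. g (grid_tag \<mu> a) * marg_prob CARD('j) N m (sum a UNIV)) - weighted_grid_sum g \<mu> L\<bar>
           \<le> \<eta> * weighted_grid_sum g \<mu> L"
proof -
  let ?k = "CARD('j)"
  let ?w = "\<lambda>a::'j \<Rightarrow> nat. exp_weight (grid_tag \<mu> a) * (1/\<mu>)^?k"
  have mpos: "0 < real m" using m by (cases m) auto
  have mu: "0 < \<mu>" using m mpos mueq by (cases N) auto
  have summand: "\<bar>g (grid_tag \<mu> a) * marg_prob ?k N m (sum a UNIV) - g (grid_tag \<mu> a) * ?w a\<bar>
      \<le> \<eta> * (g (grid_tag \<mu> a) * ?w a)" if a: "a \<in> lattice_cube L" for a
  proof -
    let ?s = "sum a UNIV"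
    have "?k \<le> ?s" using sum_mono[of UNIV "\<lambda>_. 1" a] a by (auto simp: PiE_iff)
    moreover have "real (?s * m) \<le> T * N"
    proof -
      have "?s \<le> ?k * L" using sum_mono[of UNIV a "\<lambda>_. L"] a by (auto simp: PiE_iff)
      hence "real ?s \<le> T * \<mu>" using LT by (metis of_nat_le_iff of_nat_mult order_trans)
      thus ?thesis using mpos mueq by (simp add: field_simps)
    qed
    moreover have "1 \<le> m * \<delta> \<and> m \<le> \<delta> * N \<and> ?k \<le> ?s \<and> real (?s * m) \<le> T * N \<longrightarrow>
           \<bar>marg_prob ?k N m ?s * (real N / m)^?k * exp (real (?s * m) / N) - 1\<bar> < \<eta>"
      using local by blast
    ultimately have "\<bar>marg_prob ?k N m ?s * (real N / m)^?k * exp (real (?s * m) / N) - 1\<bar> < \<eta>"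
      using m by blast
    moreover have "real N / m = \<mu>" "real (?s * m) / N = real ?s / \<mu>" using mueq mpos by auto
    ultimately have ratio: "\<bar>marg_prob ?k N m ?s * \<mu>^?k * exp (real ?s / \<mu>) - 1\<bar> \<le> \<eta>" by simp
    have w: "?w a * (\<mu>^?k * exp (real ?s / \<mu>)) = 1"
      using mu by (simp add: exp_weight_grid_tag exp_minus field_simps power_one_over)
    have "marg_prob ?k N m ?s - ?w a = ?w a * (marg_prob ?k N m ?s * \<mu>^?k * exp (real ?s / \<mu>) - 1)"
      using w by (simp add: algebra_simps)
    hence P: "\<bar>marg_prob ?k N m ?s - ?w a\<bar> \<le> ?w a * \<eta>"
      using ratio mu by (simp add: abs_mult exp_weight_def mult_left_mono)
    have g0: "0 \<le> g (grid_tag \<mu> a)" using gnn grid_tag_in_orthant[OF mu] by blast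
    have "\<bar>g (grid_tag \<mu> a) * marg_prob ?k N m ?s - g (grid_tag \<mu> a) * ?w a\<bar>
        = g (grid_tag \<mu> a) * \<bar>marg_prob ?k N m ?s - ?w a\<bar>"
      using g0 by (simp add: abs_mult flip: right_diff_distrib)
    also have "\<dots> \<le> g (grid_tag \<mu> a) * (?w a * \<eta>)" using P g0 by (rule mult_left_mono)
    finally show ?thesis by (simp only: mult_ac)
  qed
  have "\<bar>(\<Sum>a\<in>lattice_cube L. g (grid_tag \<mu> a) * marg_prob ?k N m (sum a UNIV)) - weighted_grid_sum g \<mu> L\<bar>
      = \<bar>\<Sum>a\<in>lattice_cube L. g (grid_tag \<mu> a) * marg_prob ?k N m (sum a UNIV) - g (grid_tag \<mu> a) * ?w a\<bar>"
    by (simp add: weighted_grid_sum_def sum_subtractf sum_distrib_right mult.assoc)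
  also have "\<dots> \<le> (\<Sum>a\<in>lattice_cube L. \<eta> * (g (grid_tag \<mu> a) * ?w a))"
    by (intro order_trans[OF sum_abs] sum_mono summand)
  also have "\<dots> = \<eta> * weighted_grid_sum g \<mu> L"
    by (simp add: weighted_grid_sum_def sum_distrib_left sum_distrib_right mult.assoc)
  finally show ?thesis .
qed

lemma cutoff_index:
  fixes \<mu> :: real and K n0 :: nat
  assumes mu: "1 \<le> \<mu>" and K: "n0 + 1 \<le> K"
  defines "L \<equiv> nat \<lfloor>real K * \<mu>\<rfloor>"
  shows "1 \<le> L" "real L \<le> real K * \<mu>" "real K * \<mu> < real L + 1"
    and "real L / \<mu> \<le> real K" "real n0 \<le> real L / \<mu>"
proof -
  have "1 \<le> real K" using K by simp
  hence "1 * 1 \<le> real K * \<mu>" using mu by (intro mult_mono) auto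
  hence "1 \<le> real K * \<mu>" by simp
  thus L: "1 \<le> L" "real L \<le> real K * \<mu>" "real K * \<mu> < real L + 1" unfolding L_def by linarith+
  show "real L / \<mu> \<le> real K" using L(2) mu by (simp add: divide_le_eq mult.commute)
  have "\<mu> * real n0 \<le> \<mu> * (real K - 1)" using K mu by (intro mult_left_mono) auto
  hence "\<mu> * real n0 \<le> real L" using L(3) mu by (simp add: algebra_simps)
  thus "real n0 \<le> real L / \<mu>" using mu by (simp add: le_divide_eq mult.commute)
qed

lemma exists_cutoff:
  fixes A \<epsilon> :: real
  assumes A: "0 \<le> A" and \<epsilon>: "0 < \<epsilon>"
  shows "\<exists>K::nat. n \<le> K \<and> A * exp (- (real K / 8)) \<le> \<epsilon>"
proof -
  obtain K :: nat where K: "real n + 1 + 8 * A / \<epsilon> \<le> real K" using real_arch_simple by blast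
  have Kpos: "0 < real K" using K A \<epsilon> by (smt (verit) divide_nonneg_pos of_nat_0_le_iff)
  have "exp (- (real K / 8)) \<le> 8 / real K"
  proof -
    have "real K / 8 \<le> exp (real K / 8)" using exp_ge_add_one_self[of "real K / 8"] by linarith
    thus ?thesis using Kpos by (simp add: exp_minus divide_simps)
  qed
  hence "A * exp (- (real K / 8)) \<le> A * (8 / real K)" using A by (intro mult_left_mono)
  also have "\<dots> \<le> \<epsilon>"
  proof -
    have "8 * A / \<epsilon> \<le> real K" using K A \<epsilon> by linarith
    thus ?thesis using Kpos \<epsilon> by (simp add: divide_simps mult.commute)
  qed
  moreover have "real n \<le> real K" using K A \<epsilon> by (smt (verit) divide_nonneg_pos)
  ultimately show ?thesis by (intro exI[of _ K]) simp
qed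

lemma comp_expect_lattice_split:
  fixes g :: "real^'j::finite \<Rightarrow> real" and \<sigma> :: "'j \<Rightarrow> nat"
  assumes \<sigma>: "inj \<sigma>" "range \<sigma> \<subseteq> {1..m}" and m: "CARD('j) + 2 \<le> m" and N: "0 < N" and LN: "L \<le> N"
  shows "comp_expect N m (\<lambda>X. g (\<chi> i. real (X (\<sigma> i)) / \<mu>))
      = (\<Sum>a\<in>lattice_cube L. g (grid_tag \<mu> a) * marg_prob CARD('j) N m (sum a UNIV))
      + (\<Sum>a\<in>lattice_cube N - lattice_cube L. g (grid_tag \<mu> a) * marg_prob CARD('j) N m (sum a UNIV))"
proof -
  have "comp_expect N m (\<lambda>X. g (\<chi> i. real (X (\<sigma> i)) / \<mu>))
      = (\<Sum>a\<in>lattice_cube N. g (grid_tag \<mu> a) * marg_prob CARD('j) N m (sum a UNIV))"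
    using comp_expect_marginal[OF \<sigma> m N, of "\<lambda>a. g (grid_tag \<mu> a)"] by (simp add: grid_tag_def)
  moreover have "lattice_cube L \<subseteq> (lattice_cube N :: ('j \<Rightarrow> nat) set)"
    using LN by (auto simp: PiE_iff) (meson le_trans)
  hence "(\<Sum>a\<in>lattice_cube N. g (grid_tag \<mu> a) * marg_prob CARD('j) N m (sum a UNIV))
      = (\<Sum>a\<in>lattice_cube N - lattice_cube L. g (grid_tag \<mu> a) * marg_prob CARD('j) N m (sum a UNIV))
      + (\<Sum>a\<in>lattice_cube L. g (grid_tag \<mu> a) * marg_prob CARD('j) N m (sum a UNIV))"
    by (intro sum.subset_diff) (auto simp: finite_PiE)
  ultimately show ?thesis by simp
qed

text \<open>Combination of the estimates at one scale mu = N/m: with the lattice cube cut at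
  L = floor(K mu), the expectation differs from the integral by four error terms, each
  of size at most e (tail of the marginal sum, local relative error, Riemann sum, truncation of the
  integral to a box).\<close>
lemma expectation_error_at_scale:
  fixes g :: "real^'j::finite \<Rightarrow> real" and \<sigma> :: "'j \<Rightarrow> nat" and K n0 N m :: nat
  defines "I \<equiv> integral orthant (\<lambda>x. g x * exp_weight x)" and "\<mu> \<equiv> real N / real m"
  assumes gnn: "\<forall>x\<in>orthant. 0 \<le> g x" and gr: "\<forall>a b. a \<in> orthant \<longrightarrow> riemann_integrable_on g (cbox a b)"
    and G: "0 \<le> G" and gG: "\<forall>x\<in>orthant. g x \<le> G * exp ((\<Sum>i\<in>UNIV. x$i) / 8)"
    and box: "\<forall>n\<ge>n0. \<bar>integral (cbox 0 (\<chi> i. real n)) (\<lambda>x. g x * exp_weight x) - I\<bar> < e"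
    and tail: "G * 4^CARD('j) * exp (CARD('j) / 2) * exp (- (real K / 8)) \<le> e" and K: "n0 + 1 \<le> K"
    and riemann: "\<forall>\<mu> L. \<mu>1 \<le> \<mu> \<and> 1 \<le> L \<and> real L / \<mu> \<le> real K \<longrightarrow>
         \<bar>weighted_grid_sum g \<mu> L - integral (cbox 0 (\<chi> i. real L / \<mu>)) (\<lambda>x. g x * exp_weight x)\<bar> \<le> e"
    and local: "\<forall>N m s. 1 \<le> m * \<delta> \<and> m \<le> \<delta> * N \<and> CARD('j) \<le> s \<and> real (s * m) \<le> real (CARD('j) * K) * N \<longrightarrow>
         \<bar>marg_prob CARD('j) N m s * (real N / m)^CARD('j) * exp (real (s * m) / N) - 1\<bar> < \<eta>"
    and \<eta>: "0 \<le> \<eta>" "\<eta> * (I + e) < e" and \<delta>: "0 < \<delta>"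
    and scale: "1 / \<delta> \<le> m" "1 / \<delta> \<le> \<mu>" "\<mu>1 \<le> \<mu>" "real K \<le> m" "2 * CARD('j) + 3 \<le> m" "1 \<le> \<mu>"
    and \<sigma>: "inj \<sigma>" "range \<sigma> \<subseteq> {1..m}"
  shows "\<bar>comp_expect N m (\<lambda>X. g (\<chi> i. real (X (\<sigma> i)) / \<mu>)) - I\<bar> < 5 * e"
proof -
  let ?k = "CARD('j)" and ?box = "\<lambda>r. integral (cbox 0 (\<chi> i. r)) (\<lambda>x. g x * exp_weight x)"
  let ?P = "\<lambda>a. g (grid_tag \<mu> a) * marg_prob ?k N m (sum a UNIV)"
  define L where "L = nat \<lfloor>real K * \<mu>\<rfloor>"
  have mpos: "0 < real m" and mu: "0 < \<mu>" using scale by auto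
  have N: "real N = \<mu> * m" using mpos by (simp add: \<mu>_def)
  hence Npos: "0 < N" using mu mpos by (metis of_nat_0_less_iff mult_pos_pos)
  have "1 * real m \<le> \<mu> * real m" using scale(6) mpos by (intro mult_right_mono) auto
  hence mN: "m \<le> N" using N by simp
  have m\<delta>: "1 \<le> m * \<delta>" "m \<le> \<delta> * N"
    using scale(1,2) \<delta> mpos N by (simp_all add: divide_le_eq mult_ac mult_right_mono)
  note L = cutoff_index[OF scale(6) K, folded L_def]
  have "real K * \<mu> \<le> real m * \<mu>" using scale(4) mu by (intro mult_right_mono) auto
  hence "real L \<le> real N" using L(2) N by (simp add: mult.commute)
  hence LN: "L \<le> N" by simp
  have split: "comp_expect N m (\<lambda>X. g (\<chi> i. real (X (\<sigma> i)) / \<mu>))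
      = (\<Sum>a\<in>lattice_cube L. ?P a) + (\<Sum>a\<in>lattice_cube N - lattice_cube L. ?P a)"
    using scale(5) by (intro comp_expect_lattice_split[OF \<sigma> _ Npos LN]) simp
  have rs: "\<bar>weighted_grid_sum g \<mu> L - ?box (real L / \<mu>)\<bar> \<le> e" using riemann scale(3) L(1,4) by blast
  have box_le: "?box (real L / \<mu>) \<le> I"
    unfolding I_def using mu by (intro weighted_integral_orthant(2)[OF gr gnn G gG]) simp
  have trunc: "\<bar>?box (real L / \<mu>) - I\<bar> < e"
  proof -
    have "?box (real n0) \<le> ?box (real L / \<mu>)" using L(5) by (intro weighted_integral_box_mono[OF gr gnn]) auto
    moreover have "\<bar>?box (real n0) - I\<bar> < e" using box by blast
    ultimately show ?thesis using box_le by linarith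
  qed
  have loc: "\<bar>(\<Sum>a\<in>lattice_cube L. ?P a) - weighted_grid_sum g \<mu> L\<bar> \<le> \<eta> * weighted_grid_sum g \<mu> L"
  proof (rule marginal_local_sum[OF gnn local meta_eq_to_obj_eq[OF \<mu>_def] m\<delta>])
    have "real ?k * real L \<le> real ?k * (real K * \<mu>)" using L(2) by (intro mult_left_mono) auto
    thus "real (?k * L) \<le> real (?k * K) * \<mu>" by (simp only: of_nat_mult mult.assoc)
  qed
  have tl: "(\<Sum>a\<in>lattice_cube N - lattice_cube L. ?P a) \<le> e"
  proof -
    have "2 * ?k + 2 \<le> m" using scale(5) by simp
    from marginal_tail_sum[OF scale(6) meta_eq_to_obj_eq[OF \<mu>_def] this mN G gG gnn L(3)] tail show ?thesis by linarith
  qed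
  have tl0: "0 \<le> (\<Sum>a\<in>lattice_cube N - lattice_cube L. ?P a)"
    using gnn grid_tag_in_orthant[OF mu] marg_prob_nonneg by (intro sum_nonneg mult_nonneg_nonneg) auto
  have "\<eta> * weighted_grid_sum g \<mu> L \<le> \<eta> * (I + e)" using rs box_le \<eta> by (intro mult_left_mono) auto
  thus ?thesis unfolding split using loc rs trunc tl tl0 \<eta> by linarith
qed

lemma marginal_expectation_converges:
  fixes g :: "real^'j::finite \<Rightarrow> real"
  assumes gnn: "\<forall>x\<in>orthant. 0 \<le> g x" and gr: "\<forall>a b. a \<in> orthant \<longrightarrow> riemann_integrable_on g (cbox a b)"
    and G: "0 \<le> G" and gG: "\<forall>x\<in>orthant. g x \<le> G * exp ((\<Sum>i\<in>UNIV. x$i) / 8)" and \<epsilon>: "0 < \<epsilon>"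
  shows "\<exists>M>0. \<forall>N m (\<sigma>::'j \<Rightarrow> nat). M < real m \<and> M < real N / real m \<and> inj \<sigma> \<and> range \<sigma> \<subseteq> {1..m} \<longrightarrow>
           \<bar>comp_expect N m (\<lambda>X. g (\<chi> i. real (X (\<sigma> i)) / (real N / real m)))
             - integral orthant (\<lambda>x. g x * exp_weight x)\<bar> < \<epsilon>"
proof -
  let ?k = "CARD('j)"
  define e I where "e = \<epsilon> / 5" and "I = integral orthant (\<lambda>x. g x * exp_weight x)"
  have e: "0 < e" using \<epsilon> by (simp add: e_def)
  note orthant = weighted_integral_orthant[OF gr gnn G gG, folded I_def]
  obtain n0 where box: "\<forall>n\<ge>n0. \<bar>integral (cbox 0 (\<chi> i. real n)) (\<lambda>x. g x * exp_weight x) - I\<bar> < e"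
    using LIMSEQ_D[OF orthant(1) e] by auto
  obtain K :: nat where K: "n0 + 1 \<le> K" and tail: "G * 4^?k * exp (?k / 2) * exp (- (real K / 8)) \<le> e"
    using exists_cutoff[of "G * 4^?k * exp (?k / 2)" e "n0 + 1"] G e by auto
  have "riemann_integrable_on g (cbox 0 (\<chi> i. real K))" using gr by (simp add: orthant_def)
  then obtain \<mu>1 where \<mu>1: "0 < \<mu>1" and riemann: "\<forall>\<mu> L. \<mu>1 \<le> \<mu> \<and> 1 \<le> L \<and> real L / \<mu> \<le> real K \<longrightarrow>
      \<bar>weighted_grid_sum g \<mu> L - integral (cbox 0 (\<chi> i. real L / \<mu>)) (\<lambda>x. g x * exp_weight x)\<bar> \<le> e"
    using weighted_grid_sum_converges[OF _ gnn e] by blast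
  define \<eta> where "\<eta> = e / (I + e + 1)"
  have \<eta>: "0 < \<eta>" "\<eta> * (I + e) < e" using orthant(3) e by (simp_all add: \<eta>_def field_simps)
  obtain \<delta> :: real where \<delta>: "0 < \<delta>" and local: "\<forall>N m s. 1 \<le> m * \<delta> \<and> m \<le> \<delta> * N \<and> ?k \<le> s \<and> real (s * m) \<le> real (?k * K) * N \<longrightarrow>
      \<bar>marg_prob ?k N m s * (real N / m)^?k * exp (real (s * m) / N) - 1\<bar> < \<eta>"
    using marg_prob_local_limit[of "real (?k * K)" \<eta> ?k] \<eta> by auto
  define M where "M = 1 / \<delta> + \<mu>1 + real K + 2 * ?k + 3"
  have M: "1 / \<delta> \<le> M" "\<mu>1 \<le> M" "real K \<le> M" "2 * ?k + 3 \<le> M" "1 \<le> M"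
    using \<delta> \<mu>1 by (auto simp: M_def)
  have "\<forall>N m (\<sigma>::'j \<Rightarrow> nat). M < real m \<and> M < real N / real m \<and> inj \<sigma> \<and> range \<sigma> \<subseteq> {1..m} \<longrightarrow>
           \<bar>comp_expect N m (\<lambda>X. g (\<chi> i. real (X (\<sigma> i)) / (real N / real m))) - I\<bar> < \<epsilon>"
  proof (intro allI impI)
    fix N m :: nat and \<sigma> :: "'j \<Rightarrow> nat"
    assume H: "M < real m \<and> M < real N / real m \<and> inj \<sigma> \<and> range \<sigma> \<subseteq> {1..m}"
    have scale: "1 / \<delta> \<le> real m" "1 / \<delta> \<le> real N / real m" "\<mu>1 \<le> real N / real m"
        "real K \<le> real m" "real (2 * ?k + 3) \<le> real m" "1 \<le> real N / real m"
      using H M by linarith+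
    have "\<bar>comp_expect N m (\<lambda>X. g (\<chi> i. real (X (\<sigma> i)) / (real N / real m))) - I\<bar> < 5 * e"
      using expectation_error_at_scale[OF gnn gr G gG box[unfolded I_def] tail K riemann local
          less_imp_le[OF \<eta>(1)] \<eta>(2)[unfolded I_def] \<delta> scale(1-4) scale(5)[unfolded of_nat_le_iff]
          scale(6)] H unfolding I_def by blast
    thus "\<bar>comp_expect N m (\<lambda>X. g (\<chi> i. real (X (\<sigma> i)) / (real N / real m))) - I\<bar> < \<epsilon>"
      by (simp add: e_def)
  qed
  moreover have "0 < M" using M by linarith
  ultimately show ?thesis unfolding I_def by blast
qed

lemma threshold_to_omega_regime:
  fixes \<omega> :: "nat \<Rightarrow> real" and P :: "nat \<Rightarrow> nat \<Rightarrow> 'a \<Rightarrow> bool" and Q :: "real \<Rightarrow> nat \<Rightarrow> nat \<Rightarrow> 'a \<Rightarrow> bool"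
  assumes \<omega>: "filterlim \<omega> at_top sequentially"
    and threshold: "\<forall>\<epsilon>>0. \<exists>M>0. \<forall>N m \<sigma>. M < real m \<and> M < real N / real m \<and> P N m \<sigma> \<longrightarrow> Q \<epsilon> N m \<sigma>"
  shows "\<forall>\<epsilon>>0. \<exists>N0. \<forall>N\<ge>N0. \<forall>m \<sigma>. \<omega> N < real m \<and> real m < real N / \<omega> N \<and> P N m \<sigma> \<longrightarrow> Q \<epsilon> N m \<sigma>"
proof (intro allI impI)
  fix \<epsilon> :: real assume "0 < \<epsilon>"
  then obtain M where M: "0 < M" and close: "\<forall>N m \<sigma>. M < real m \<and> M < real N / real m \<and> P N m \<sigma> \<longrightarrow> Q \<epsilon> N m \<sigma>"
    using threshold by blast
  obtain N0 where N0: "\<forall>N\<ge>N0. M \<le> \<omega> N"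
    using \<omega> unfolding filterlim_at_top eventually_sequentially by blast
  have "Q \<epsilon> N m \<sigma>" if "N0 \<le> N" and H: "\<omega> N < real m \<and> real m < real N / \<omega> N \<and> P N m \<sigma>" for N m \<sigma>
  proof -
    have \<omega>N: "M \<le> \<omega> N" using N0 that(1) by blast
    hence "\<omega> N < real N / real m" using H M by (simp add: field_simps)
    thus ?thesis using close H \<omega>N by (meson order_le_less_trans)
  qed
  thus "\<exists>N0. \<forall>N\<ge>N0. \<forall>m \<sigma>. \<omega> N < real m \<and> real m < real N / \<omega> N \<and> P N m \<sigma> \<longrightarrow> Q \<epsilon> N m \<sigma>" by blast
qed

theorem mainTheorem2:
  fixes g :: "real^'j \<Rightarrow> real" and C d :: real and \<omega> :: "nat \<Rightarrow> real"
  assumes g_nonneg: "\<forall>x\<in>orthant. 0 \<le> g x"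
    and g_riemann: "\<forall>a b. a \<in> orthant \<longrightarrow> riemann_integrable_on g (cbox a b)"
    and C_nonneg: "0 \<le> C" and d_nonneg: "0 \<le> d"
    and g_bound: "\<forall>x\<in>orthant. g x \<le> C * pow0 (\<Sum>i\<in>UNIV. x $ i) d"
    and \<omega>_lim: "filterlim \<omega> at_top sequentially"
  shows "\<forall>\<epsilon>>0. \<exists>N0. \<forall>N\<ge>N0. \<forall>m::nat. \<forall>\<sigma>::'j \<Rightarrow> nat.
           \<omega> N < real m \<and> real m < real N / \<omega> N \<and> inj \<sigma> \<and> range \<sigma> \<subseteq> {1..m} \<longrightarrow>
           \<bar>comp_expect N m (\<lambda>X. g (\<chi> i. real (X (\<sigma> i)) / (real N / real m)))
             - integral orthant (\<lambda>x. g x * exp (- (\<Sum>i\<in>UNIV. x $ i)))\<bar> < \<epsilon>"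
proof -
  obtain G where G: "0 \<le> G" and gG: "\<forall>x\<in>orthant. g x \<le> G * exp ((\<Sum>i\<in>UNIV. x$i) / 8)"
    using exp_majorant[OF C_nonneg d_nonneg g_bound] by blast
  have "\<forall>\<epsilon>>0. \<exists>M>0. \<forall>N m (\<sigma>::'j \<Rightarrow> nat). M < real m \<and> M < real N / real m \<and> inj \<sigma> \<and> range \<sigma> \<subseteq> {1..m} \<longrightarrow>
      \<bar>comp_expect N m (\<lambda>X. g (\<chi> i. real (X (\<sigma> i)) / (real N / real m)))
        - integral orthant (\<lambda>x. g x * exp (- (\<Sum>i\<in>UNIV. x $ i)))\<bar> < \<epsilon>"
    using marginal_expectation_converges[OF g_nonneg g_riemann G gG] unfolding exp_weight_def by blast
  from threshold_to_omega_regime[OF \<omega>_lim this] show ?thesis by blast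
qed

end
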